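(* Let $\{(\mathcal{X}_j,\mathring{\mathcal{X}}_j,p_j)\}_{j\in\mathcal{I}}$ be $B$-$B$-bimodules with specified projections with reduced free product $(\mathcal{X},\mathring{\mathcal{X}},p)$ and let $i\in\mathcal{I}$. Then the map $\beta_i:\mathcal{L}(\mathcal{X}_i)\to\mathcal{L}(\mathcal{X})$, $\beta_i(a)=P_i\lambda_i(a)P_i$, is a homomorphism.
   Context: $B$ is a unital complex algebra. A $B$-$B$-bimodule with specified projection is a triple $(\mathcal{X},\mathring{\mathcal{X}},p)$ with $\mathcal{X}=B\oplus\mathring{\mathcal{X}}$ a direct sum of $B$-$B$-bimodules and $p(b\oplus\eta)=b$; $\mathcal{L}(\mathcal{X})$ is the algebra of linear operators on $\mathcal{X}$ respecting the bimodule structure. The reduced free product is $\mathcal{X}=B\oplus\mathring{\mathcal{X}}$ with $\mathring{\mathcal{X}}=\bigoplus_{n\ge1}\bigoplus_{i_1\ne\cdots\ne i_n}\mathring{\mathcal{X}}_{i_1}\otimes_B\cdots\otimes_B\mathring{\mathcal{X}}_{i_n}$ (consecutive indices distinct). For $i\in\mathcal{I}$, $\mathcal{X}(i)=B\oplus\bigoplus_{n\ge1}\bigoplus_{i_1\ne\cdots\ne i_n,\ i_1\ne i}\mathring{\mathcal{X}}_{i_1}\otimes_B\cdots\otimes_B\mathring{\mathcal{X}}_{i_n}$, $V_i:\mathcal{X}\to\mathcal{X}_i\otimes_B\mathcal{X}(i)$ is the natural bimodule isomorphism, $\lambda_i(a)=V_i^{-1}(a\otimes I)V_i$, and $P_i$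 is the projection of $\mathcal{X}$ onto the summand $B\oplus\mathring{\mathcal{X}}_i$, vanishing on the other direct summands. *)

theory Defs
  imports Complex_Main
begin

class cvec = ab_group_add +
  fixes scaleC :: "complex \<Rightarrow> 'a \<Rightarrow> 'a" (infixr \<open>*\<^sub>C\<close> 75)
  assumes scaleC_add_right: "c *\<^sub>C (x + y) = c *\<^sub>C x + c *\<^sub>C y"
    and scaleC_add_left: "(c + d) *\<^sub>C x = c *\<^sub>C x + d *\<^sub>C x"
    and scaleC_scaleC: "c *\<^sub>C (d *\<^sub>C x) = (c * d) *\<^sub>C x"
    and scaleC_one: "1 *\<^sub>C x = x"

class calg1 = cvec + ring_1 +
  assumes mult_scaleC_left: "(c *\<^sub>C x) * y = c *\<^sub>C (x * y)"
    and mult_scaleC_right: "x * (c *\<^sub>C y) = c *\<^sub>C (x * y)"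

section \<open>B-B-bimodules (as subspaces of a complex vector space with actions)\<close>

definition bimod :: "'x::cvec set \<Rightarrow> ('b::calg1 \<Rightarrow> 'x \<Rightarrow> 'x) \<Rightarrow> ('x \<Rightarrow> 'b \<Rightarrow> 'x) \<Rightarrow> bool" where
  "bimod M l r \<longleftrightarrow> 0 \<in> M \<and> (\<forall>x\<in>M. \<forall>y\<in>M. x + y \<in> M) \<and> (\<forall>c. \<forall>x\<in>M. c *\<^sub>C x \<in> M)
    \<and> (\<forall>b. \<forall>x\<in>M. l b x \<in> M \<and> r x b \<in> M)
    \<and> (\<forall>x\<in>M. l 1 x = x \<and> r x 1 = x)
    \<and> (\<forall>a b. \<forall>x\<in>M. l a (l b x) = l (a * b) x \<and> r (r x a) b = r x (a * b) \<and> l a (r x b) = r (l a x) b)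
    \<and> (\<forall>a b. \<forall>x\<in>M. \<forall>y\<in>M. l (a + b) x = l a x + l b x \<and> l a (x + y) = l a x + l a y
                        \<and> r x (a + b) = r x a + r x b \<and> r (x + y) a = r x a + r y a)
    \<and> (\<forall>c b. \<forall>x\<in>M. l (c *\<^sub>C b) x = c *\<^sub>C l b x \<and> l b (c *\<^sub>C x) = c *\<^sub>C l b x
                     \<and> r x (c *\<^sub>C b) = c *\<^sub>C r x b \<and> r (c *\<^sub>C x) b = c *\<^sub>C r x b)"

record ('v, 'b) bimodr =
  car :: "'v set"
  add :: "'v \<Rightarrow> 'v \<Rightarrow> 'v"
  scl :: "complex \<Rightarrow> 'v \<Rightarrow> 'v"
  lac :: "'b \<Rightarrow> 'v \<Rightarrow> 'v"
  rac :: "'v \<Rightarrow> 'b \<Rightarrow> 'v"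

definition Lop :: "('v, 'b) bimodr \<Rightarrow> ('v \<Rightarrow> 'v) set" where
  "Lop M = {T. (\<forall>u\<in>car M. T u \<in> car M)
      \<and> (\<forall>u\<in>car M. \<forall>u'\<in>car M. T (add M u u') = add M (T u) (T u'))
      \<and> (\<forall>z. \<forall>u\<in>car M. T (scl M z u) = scl M z (T u))
      \<and> (\<forall>b. \<forall>u\<in>car M. T (lac M b u) = lac M b (T u) \<and> T (rac M u b) = rac M (T u) b)}"

text \<open>Algebra homomorphism \<open>\<L>(M) \<rightarrow> \<L>(N)\<close> (operators compared on the carrier).\<close>
definition is_alg_hom :: "('u, 'b) bimodr \<Rightarrow> ('v, 'b) bimodr \<Rightarrow> (('u \<Rightarrow> 'u) \<Rightarrow> ('v \<Rightarrow> 'v)) \<Rightarrow> bool" where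
  "is_alg_hom M N \<beta> \<longleftrightarrow>
     (\<forall>a\<in>Lop M. \<beta> a \<in> Lop N)
   \<and> (\<forall>a\<in>Lop M. \<forall>a'\<in>Lop M. \<forall>v\<in>car N.
         \<beta> (a \<circ> a') v = \<beta> a (\<beta> a' v)
       \<and> \<beta> (\<lambda>u. add M (a u) (a' u)) v = add N (\<beta> a v) (\<beta> a' v))
   \<and> (\<forall>z. \<forall>a\<in>Lop M. \<forall>v\<in>car N. \<beta> (\<lambda>u. scl M z (a u)) v = scl N z (\<beta> a v))"

definition free_on :: "'g set \<Rightarrow> ('g \<Rightarrow> complex) set" where
  "free_on G = {f. finite {g. f g \<noteq> 0} \<and> (\<forall>g. f g \<noteq> 0 \<longrightarrow> g \<in> G)}"

definition delta :: "'g \<Rightarrow> 'g \<Rightarrow> complex" where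
  "delta g = (\<lambda>h. if h = g then 1 else 0)"

definition fsub :: "('g \<Rightarrow> complex) \<Rightarrow> ('g \<Rightarrow> complex) \<Rightarrow> 'g \<Rightarrow> complex" where
  "fsub f g = (\<lambda>h. f h - g h)"

definition fplus :: "('g \<Rightarrow> complex) \<Rightarrow> ('g \<Rightarrow> complex) \<Rightarrow> 'g \<Rightarrow> complex" where
  "fplus f g = (\<lambda>h. f h + g h)"

definition fscale :: "complex \<Rightarrow> ('g \<Rightarrow> complex) \<Rightarrow> 'g \<Rightarrow> complex" where
  "fscale z f = (\<lambda>h. z * f h)"

definition cspan :: "('g \<Rightarrow> complex) set \<Rightarrow> ('g \<Rightarrow> complex) set" where
  "cspan S = {(\<lambda>h. \<Sum>k<n. c k * v k h) | (n::nat) c v. \<forall>k<n. v k \<in> S}"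

definition lin_ext :: "('g \<Rightarrow> ('h \<Rightarrow> complex)) \<Rightarrow> ('g \<Rightarrow> complex) \<Rightarrow> 'h \<Rightarrow> complex" where
  "lin_ext \<Phi> r = (\<lambda>h. \<Sum>g\<in>{g. r g \<noteq> 0}. r g * \<Phi> g h)"

definition qcls :: "('g \<Rightarrow> complex) set \<Rightarrow> ('g \<Rightarrow> complex) \<Rightarrow> ('g \<Rightarrow> complex) set" where
  "qcls N f = {g. fsub g f \<in> N}"

definition qspace :: "'g set \<Rightarrow> ('g \<Rightarrow> complex) set \<Rightarrow> ('g \<Rightarrow> complex) set set" where
  "qspace G N = qcls N ` free_on G"

definition qmap :: "('h \<Rightarrow> complex) set \<Rightarrow> (('g \<Rightarrow> complex) \<Rightarrow> ('h \<Rightarrow> complex))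
                     \<Rightarrow> ('g \<Rightarrow> complex) set \<Rightarrow> ('h \<Rightarrow> complex) set" where
  "qmap N' F c = {g. \<exists>f\<in>c. fsub g (F f) \<in> N'}"

definition qadd :: "('g \<Rightarrow> complex) set \<Rightarrow> ('g \<Rightarrow> complex) set \<Rightarrow> ('g \<Rightarrow> complex) set \<Rightarrow> ('g \<Rightarrow> complex) set" where
  "qadd N c d = {g. \<exists>f\<in>c. \<exists>f'\<in>d. fsub g (fplus f f') \<in> N}"

definition qscl :: "('g \<Rightarrow> complex) set \<Rightarrow> complex \<Rightarrow> ('g \<Rightarrow> complex) set \<Rightarrow> ('g \<Rightarrow> complex) set" where
  "qscl N z c = qmap N (fscale z) c"

definition Xmod :: "('i \<Rightarrow> 'x::cvec set) \<Rightarrow> ('i \<Rightarrow> 'b::calg1 \<Rightarrow> 'x \<Rightarrow> 'x) \<Rightarrow> ('i \<Rightarrow> 'x \<Rightarrow> 'b \<Rightarrow> 'x)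
                    \<Rightarrow> 'i \<Rightarrow> ('b \<times> 'x, 'b) bimodr" where
  "Xmod C lm rm j = \<lparr> car = UNIV \<times> C j,
      add = (\<lambda>(b, x) (b', x'). (b + b', x + x')),
      scl = (\<lambda>z (b, x). (z *\<^sub>C b, z *\<^sub>C x)),
      lac = (\<lambda>a (b, x). (a * b, lm j a x)),
      rac = (\<lambda>(b, x) a. (b * a, rm j x a)) \<rparr>"

definition alternating :: "'i list \<Rightarrow> bool" where
  "alternating w \<longleftrightarrow> (\<forall>k. Suc k < length w \<longrightarrow> w ! k \<noteq> w ! Suc k)"

text \<open>Basis of the free space: elementary tensors \<open>x\<^sub>1 \<otimes> \<dots> \<otimes> x\<^sub>n\<close> tagged by their index word.\<close>
definition fp_gen :: "('i \<Rightarrow> 'x set) \<Rightarrow> ('i list \<times> 'x list) set" where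
  "fp_gen C = {(w, xs). w \<noteq> [] \<and> alternating w \<and> length xs = length w
                        \<and> (\<forall>k<length w. xs ! k \<in> C (w ! k))}"

text \<open>Relations defining the tensor products over \<open>B\<close>: multilinearity and \<open>B\<close>-balancedness.\<close>
definition fp_rel :: "('i \<Rightarrow> 'x::cvec set) \<Rightarrow> ('i \<Rightarrow> 'b::calg1 \<Rightarrow> 'x \<Rightarrow> 'x) \<Rightarrow> ('i \<Rightarrow> 'x \<Rightarrow> 'b \<Rightarrow> 'x)
                    \<Rightarrow> ('i list \<times> 'x list \<Rightarrow> complex) set" where
  "fp_rel C lm rm = cspan (
      {fsub (fsub (delta (w, xs[k := x + y])) (delta (w, xs[k := x]))) (delta (w, xs[k := y]))
         | w xs k x y. (w, xs) \<in> fp_gen C \<and> k < length w \<and> x \<in> C (w ! k) \<and> y \<in> C (w ! k)}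
    \<union> {fsub (delta (w, xs[k := z *\<^sub>C x])) (fscale z (delta (w, xs[k := x])))
         | w xs k x z. (w, xs) \<in> fp_gen C \<and> k < length w \<and> x \<in> C (w ! k)}
    \<union> {fsub (delta (w, xs[k := rm (w ! k) x b, Suc k := y]))
              (delta (w, xs[k := x, Suc k := lm (w ! Suc k) b y]))
         | w xs k x y b. (w, xs) \<in> fp_gen C \<and> Suc k < length w
              \<and> x \<in> C (w ! k) \<and> y \<in> C (w ! Suc k)})"

type_synonym ('i, 'x) fpq = "('i list \<times> 'x list \<Rightarrow> complex) set"

text \<open>The reduced free product \<open>\<X> = B \<oplus> \<X>\<^sup>\<circ>\<close>; the second component is an element of
  \<open>\<X>\<^sup>\<circ>\<close> (an equivalence class of the free space modulo the relations).\<close>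
definition FP :: "('i \<Rightarrow> 'x::cvec set) \<Rightarrow> ('i \<Rightarrow> 'b::calg1 \<Rightarrow> 'x \<Rightarrow> 'x) \<Rightarrow> ('i \<Rightarrow> 'x \<Rightarrow> 'b \<Rightarrow> 'x)
                \<Rightarrow> ('b \<times> ('i, 'x) fpq, 'b) bimodr" where
  "FP C lm rm = (let N = fp_rel C lm rm in
     \<lparr> car = UNIV \<times> qspace (fp_gen C) N,
       add = (\<lambda>(b, c) (b', c'). (b + b', qadd N c c')),
       scl = (\<lambda>z (b, c). (z *\<^sub>C b, qscl N z c)),
       lac = (\<lambda>a (b, c). (a * b,
                qmap N (lin_ext (\<lambda>(w, xs). delta (w, xs[0 := lm (hd w) a (hd xs)]))) c)),
       rac = (\<lambda>(b, c) a. (b * a,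
                qmap N (lin_ext (\<lambda>(w, xs). delta (w, xs[length xs - 1 := rm (last w) (last xs) a]))) c)) \<rparr>)"

text \<open>The submodule \<open>\<X>(i)\<close>: \<open>B\<close> plus tensors whose word does not start with \<open>i\<close>.\<close>
definition Xsub :: "('i \<Rightarrow> 'x::cvec set) \<Rightarrow> ('i \<Rightarrow> 'b::calg1 \<Rightarrow> 'x \<Rightarrow> 'x) \<Rightarrow> ('i \<Rightarrow> 'x \<Rightarrow> 'b \<Rightarrow> 'x)
                  \<Rightarrow> 'i \<Rightarrow> ('b \<times> ('i, 'x) fpq) set" where
  "Xsub C lm rm i = {(b, c). c \<in> qspace (fp_gen C) (fp_rel C lm rm)
        \<and> (\<exists>f\<in>c. f \<in> free_on {(w, xs) \<in> fp_gen C. hd w \<noteq> i})}"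

section \<open>Balanced tensor product \<open>M \<otimes>\<^sub>B S\<close> (S a sub-bimodule of N given by its carrier)\<close>

definition tens_rel :: "('u, 'b::calg1) bimodr \<Rightarrow> ('v, 'b) bimodr \<Rightarrow> 'v set \<Rightarrow> ('u \<times> 'v \<Rightarrow> complex) set" where
  "tens_rel M N S = cspan (
      {fsub (fsub (delta (add M u u', v)) (delta (u, v))) (delta (u', v)) | u u' v.
          u \<in> car M \<and> u' \<in> car M \<and> v \<in> S}
    \<union> {fsub (fsub (delta (u, add N v v')) (delta (u, v))) (delta (u, v')) | u v v'.
          u \<in> car M \<and> v \<in> S \<and> v' \<in> S}
    \<union> {fsub (delta (scl M z u, v)) (fscale z (delta (u, v))) | u v z. u \<in> car M \<and> v \<in> S}
    \<union> {fsub (delta (u, scl N z v)) (fscale z (delta (u, v))) | u v z. u \<in> car M \<and> v \<in> S}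
    \<union> {fsub (delta (rac M u b, v)) (delta (u, lac N b v)) | u v b. u \<in> car M \<and> v \<in> S})"

definition tens_space :: "('u, 'b::calg1) bimodr \<Rightarrow> ('v, 'b) bimodr \<Rightarrow> 'v set \<Rightarrow> ('u \<times> 'v \<Rightarrow> complex) set set" where
  "tens_space M N S = qspace (car M \<times> S) (tens_rel M N S)"

definition Ti_rel where
  "Ti_rel C lm rm i = tens_rel (Xmod C lm rm i) (FP C lm rm) (Xsub C lm rm i)"

text \<open>The natural bimodule isomorphism \<open>V\<^sub>i : \<X> \<rightarrow> \<X>\<^sub>i \<otimes>\<^sub>B \<X>(i)\<close>, given on elementary tensors.\<close>
definition V_gen :: "('i \<Rightarrow> 'x::cvec set) \<Rightarrow> ('i \<Rightarrow> 'b::calg1 \<Rightarrow> 'x \<Rightarrow> 'x) \<Rightarrow> ('i \<Rightarrow> 'x \<Rightarrow> 'b \<Rightarrow> 'x)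
     \<Rightarrow> 'i \<Rightarrow> 'i list \<times> 'x list \<Rightarrow> ('b \<times> 'x) \<times> ('b \<times> ('i, 'x) fpq) \<Rightarrow> complex" where
  "V_gen C lm rm i = (\<lambda>(w, xs). let N = fp_rel C lm rm in
      if hd w = i then
        (if tl w = [] then delta ((0, hd xs), (1, N))
         else delta ((0, hd xs), (0, qcls N (delta (tl w, tl xs)))))
      else delta ((1, 0), (0, qcls N (delta (w, xs)))))"

definition V_map :: "('i \<Rightarrow> 'x::cvec set) \<Rightarrow> ('i \<Rightarrow> 'b::calg1 \<Rightarrow> 'x \<Rightarrow> 'x) \<Rightarrow> ('i \<Rightarrow> 'x \<Rightarrow> 'b \<Rightarrow> 'x)
     \<Rightarrow> 'i \<Rightarrow> 'b \<times> ('i, 'x) fpq \<Rightarrow> (('b \<times> 'x) \<times> ('b \<times> ('i, 'x) fpq) \<Rightarrow> complex) set" where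
  "V_map C lm rm i = (\<lambda>(b, c).
      {g. \<exists>f\<in>c. fsub g (fplus (delta ((b, 0), (1, fp_rel C lm rm))) (lin_ext (V_gen C lm rm i) f))
                 \<in> Ti_rel C lm rm i})"

definition tensor_I where
  "tensor_I C lm rm i a = qmap (Ti_rel C lm rm i) (lin_ext (\<lambda>(u, v). delta (a u, v)))"

definition lambda_i where
  "lambda_i C lm rm i a =
     inv_into (car (FP C lm rm)) (V_map C lm rm i) \<circ> tensor_I C lm rm i a \<circ> V_map C lm rm i"

text \<open>\<open>P\<^sub>i\<close>: projection onto \<open>B \<oplus> \<X>\<^sup>\<circ>\<^sub>i\<close>, killing all other summands.\<close>
definition P_i where
  "P_i C lm rm i = (\<lambda>(b, c). (b,
     qmap (fp_rel C lm rm) (\<lambda>f (w, xs). if w = [i] then f (w, xs) else 0) c))"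

definition beta_i where
  "beta_i C lm rm i a = P_i C lm rm i \<circ> lambda_i C lm rm i a \<circ> P_i C lm rm i"

end

theory Submission
  imports Defs
begin

text \<open>
  An element of \<open>\<X>\<close> is \<open>(b, [f])\<close> with \<open>f\<close> a finite combination of elementary tensors.
  \<open>P\<^sub>i\<close> keeps \<open>b\<close> and the part of \<open>f\<close> on the one-letter word \<open>[i]\<close>, which modulo the
  relations is a single tensor \<open>x \<in> \<X>\<^sup>\<circ>\<^sub>i\<close>; thus \<open>P\<^sub>i (b, [f]) = \<iota> (b, x)\<close> for the
  inclusion \<open>\<iota> : \<X>\<^sub>i \<rightarrow> \<X>\<close>. Since \<open>V\<^sub>i (\<iota> U) = U \<otimes> 1\<close>, the operator \<open>a \<otimes> I\<close> sends
  it to \<open>a U \<otimes> 1 = V\<^sub>i (\<iota> (a U))\<close>, and every \<open>V\<^sub>i\<close>-preimage of \<open>a U \<otimes> 1\<close> is mapped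
  by \<open>P\<^sub>i\<close> to \<open>\<iota> (a U)\<close>. Hence \<open>\<beta>\<^sub>i a = \<iota> \<circ> a \<circ> \<pi>\<close> with \<open>\<pi> (b, [f]) = (b, x)\<close> a bimodule
  map satisfying \<open>\<pi> \<circ> \<iota> = id\<close>, and \<open>\<beta>\<^sub>i\<close> is multiplicative and linear.
\<close>

instantiation complex :: cvec
begin
definition scaleC_complex :: "complex \<Rightarrow> complex \<Rightarrow> complex" where "scaleC_complex c z = c * z"
instance by standard (auto simp: scaleC_complex_def algebra_simps)
end

section \<open>Finitely supported coefficient functions\<close>

lemma scaleC_zero_left[simp]: "0 *\<^sub>C (x::'a::cvec) = 0"
  using scaleC_add_left[of 0 0 x] by simp

lemma scaleC_zero_right[simp]: "c *\<^sub>C (0::'a::cvec) = 0"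
  using scaleC_add_right[of c 0 0] by simp

lemma scaleC_minus_left: "(- c) *\<^sub>C (x::'a::cvec) = - (c *\<^sub>C x)"
  using scaleC_add_left[of c "-c" x] by (simp add: eq_neg_iff_add_eq_0 add.commute)

lemma scaleC_sum_right: "c *\<^sub>C (\<Sum>k\<in>K. f k) = (\<Sum>k\<in>K. c *\<^sub>C (f k::'a::cvec))"
  by (induction K rule: infinite_finite_induct) (auto simp: scaleC_add_right)

abbreviation fin :: "('g \<Rightarrow> complex) \<Rightarrow> bool" where "fin f \<equiv> finite {g. f g \<noteq> 0}"

definition lincomb :: "('g \<Rightarrow> 'c::cvec) \<Rightarrow> ('g \<Rightarrow> complex) \<Rightarrow> 'c" where
  "lincomb \<phi> f = (\<Sum>g\<in>{g. f g \<noteq> 0}. f g *\<^sub>C \<phi> g)"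

lemma lincomb_superset: "finite S \<Longrightarrow> {g. f g \<noteq> 0} \<subseteq> S \<Longrightarrow> lincomb \<phi> f = (\<Sum>g\<in>S. f g *\<^sub>C \<phi> g)"
  unfolding lincomb_def by (rule sum.mono_neutral_left) auto

lemma lin_ext_eq_lincomb: "lin_ext \<Phi> r h = lincomb (\<lambda>g. \<Phi> g h) r"
  by (simp add: lin_ext_def lincomb_def scaleC_complex_def)

lemma fin_add: "fin f \<Longrightarrow> fin g \<Longrightarrow> fin (\<lambda>h. f h + g h)"
  by (rule finite_subset[of _ "{g. f g \<noteq> 0} \<union> {h. g h \<noteq> 0}"]) auto

lemma fin_diff: "fin f \<Longrightarrow> fin g \<Longrightarrow> fin (\<lambda>h. f h - g h)"
  by (rule finite_subset[of _ "{g. f g \<noteq> 0} \<union> {h. g h \<noteq> 0}"]) auto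

lemma fin_scale: "fin f \<Longrightarrow> fin (\<lambda>h. c * f h)"
  by (rule finite_subset[of _ "{g. f g \<noteq> 0}"]) auto

lemma fin_delta: "fin (delta g)"
  by (rule finite_subset[of _ "{g}"]) (auto simp: delta_def)

lemma fin_sum: "finite K \<Longrightarrow> \<forall>k\<in>K. fin (v k) \<Longrightarrow> fin (\<lambda>h. \<Sum>k\<in>K. c k * v k h)"
proof (induction K rule: finite_induct)
  case empty then show ?case by simp
next
  case (insert k K)
  then show ?case using fin_add[OF fin_scale[of "v k" "c k"], of "\<lambda>h. \<Sum>k\<in>K. c k * v k h"] by simp
qed

lemma lincomb_add: "fin f \<Longrightarrow> fin g \<Longrightarrow> lincomb \<phi> (\<lambda>h. f h + g h) = lincomb \<phi> f + lincomb \<phi> g"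
proof -
  assume a: "fin f" "fin g"
  let ?S = "{h. f h \<noteq> 0} \<union> {h. g h \<noteq> 0}"
  have "lincomb \<phi> (\<lambda>h. f h + g h) = (\<Sum>h\<in>?S. (f h + g h) *\<^sub>C \<phi> h)"
    by (rule lincomb_superset) (use a in auto)
  also have "\<dots> = (\<Sum>h\<in>?S. f h *\<^sub>C \<phi> h) + (\<Sum>h\<in>?S. g h *\<^sub>C \<phi> h)"
    by (simp add: scaleC_add_left sum.distrib)
  also have "\<dots> = lincomb \<phi> f + lincomb \<phi> g"
  proof -
    have "lincomb \<phi> f = (\<Sum>h\<in>?S. f h *\<^sub>C \<phi> h)" by (rule lincomb_superset) (use a in auto)
    moreover have "lincomb \<phi> g = (\<Sum>h\<in>?S. g h *\<^sub>C \<phi> h)" by (rule lincomb_superset) (use a in auto)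
    ultimately show ?thesis by simp
  qed
  finally show ?thesis .
qed

lemma lincomb_scale: "fin f \<Longrightarrow> lincomb \<phi> (\<lambda>h. c * f h) = c *\<^sub>C lincomb \<phi> f"
proof -
  assume a: "fin f"
  have "lincomb \<phi> (\<lambda>h. c * f h) = (\<Sum>h\<in>{h. f h \<noteq> 0}. (c * f h) *\<^sub>C \<phi> h)"
    by (rule lincomb_superset) (use a in auto)
  also have "\<dots> = c *\<^sub>C lincomb \<phi> f"
    by (simp add: lincomb_def scaleC_sum_right scaleC_scaleC)
  finally show ?thesis .
qed

lemma lincomb_diff: "fin f \<Longrightarrow> fin g \<Longrightarrow> lincomb \<phi> (\<lambda>h. f h - g h) = lincomb \<phi> f - lincomb \<phi> g"
proof -
  assume a: "fin f" "fin g"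
  have e: "(\<lambda>h. f h - g h) = (\<lambda>h. f h + (-1) * g h)" by simp
  have "lincomb \<phi> (\<lambda>h. f h - g h) = lincomb \<phi> (\<lambda>h. f h + (-1) * g h)" by (simp only: e)
  also have "\<dots> = lincomb \<phi> f + (-1) *\<^sub>C lincomb \<phi> g"
    using a by (simp only: lincomb_add fin_scale lincomb_scale)
  also have "\<dots> = lincomb \<phi> f - lincomb \<phi> g" by (simp add: scaleC_minus_left scaleC_one)
  finally show ?thesis .
qed

lemma lincomb_zero[simp]: "lincomb \<phi> (\<lambda>_. 0) = 0"
  by (simp add: lincomb_def)

lemma lincomb_zero_fun[simp]: "lincomb (\<lambda>g. 0) f = 0" by (simp add: lincomb_def)

lemma lincomb_delta[simp]: "lincomb \<phi> (delta g) = \<phi> g"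
proof -
  have "lincomb \<phi> (delta g) = (\<Sum>h\<in>{g}. delta g h *\<^sub>C \<phi> h)"
    by (rule lincomb_superset) (auto simp: delta_def)
  then show ?thesis by (simp add: delta_def scaleC_one)
qed

lemma lincomb_sum: "finite K \<Longrightarrow> \<forall>k\<in>K. fin (v k) \<Longrightarrow>
   lincomb \<phi> (\<lambda>h. \<Sum>k\<in>K. c k * v k h) = (\<Sum>k\<in>K. c k *\<^sub>C lincomb \<phi> (v k))"
proof (induction K rule: finite_induct)
  case empty then show ?case by simp
next
  case (insert k K)
  have "lincomb \<phi> (\<lambda>h. \<Sum>k\<in>insert k K. c k * v k h) = lincomb \<phi> (\<lambda>h. c k * v k h + (\<Sum>k\<in>K. c k * v k h))"
    using insert by simp
  also have "\<dots> = c k *\<^sub>C lincomb \<phi> (v k) + lincomb \<phi> (\<lambda>h. \<Sum>k\<in>K. c k * v k h)"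
    using insert by (simp add: lincomb_add fin_scale fin_sum lincomb_scale)
  finally show ?case using insert by simp
qed

lemma lincomb_cong: "(\<And>g. f g \<noteq> 0 \<Longrightarrow> \<phi> g = \<psi> g) \<Longrightarrow> lincomb \<phi> f = lincomb \<psi> f"
  unfolding lincomb_def by (rule sum.cong) auto

lemma lin_ext_as_sum: "lin_ext \<Phi> f = (\<lambda>h. \<Sum>g\<in>{g. f g \<noteq> 0}. f g * \<Phi> g h)"
  by (simp add: lin_ext_def)

lemma fin_lin_ext: "fin f \<Longrightarrow> (\<forall>g. fin (\<Phi> g)) \<Longrightarrow> fin (lin_ext \<Phi> f)"
  unfolding lin_ext_as_sum by (rule fin_sum) auto

lemma lincomb_lin_ext: "fin f \<Longrightarrow> (\<forall>g. fin (\<Phi> g)) \<Longrightarrow> lincomb \<psi> (lin_ext \<Phi> f) = lincomb (\<lambda>g. lincomb \<psi> (\<Phi> g)) f"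
  unfolding lin_ext_as_sum by (subst lincomb_sum) (auto simp: lincomb_def)

lemma lin_ext_delta[simp]: "lin_ext \<Phi> (delta g) = \<Phi> g"
  by (rule ext) (simp add: lin_ext_eq_lincomb)

lemma lin_ext_fsub: "fin f \<Longrightarrow> fin g \<Longrightarrow> lin_ext \<Phi> (fsub f g) = fsub (lin_ext \<Phi> f) (lin_ext \<Phi> g)"
  unfolding fsub_def by (rule ext) (simp only: lin_ext_eq_lincomb lincomb_diff)

lemma lin_ext_fscale: "fin f \<Longrightarrow> lin_ext \<Phi> (fscale c f) = fscale c (lin_ext \<Phi> f)"
  by (rule ext) (simp add: lin_ext_eq_lincomb fscale_def lincomb_scale scaleC_complex_def)

lemma lin_ext_sum: "finite K \<Longrightarrow> \<forall>k\<in>K. fin (v k) \<Longrightarrow>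
   lin_ext \<Phi> (\<lambda>h. \<Sum>k\<in>K. c k * v k h) = (\<lambda>h. \<Sum>k\<in>K. c k * lin_ext \<Phi> (v k) h)"
  by (rule ext) (simp add: lin_ext_eq_lincomb lincomb_sum scaleC_complex_def)

lemma lincomb_fsub: "fin f \<Longrightarrow> fin g \<Longrightarrow> lincomb \<phi> (fsub f g) = lincomb \<phi> f - lincomb \<phi> g"
  unfolding fsub_def by (simp only: lincomb_diff)

lemma lincomb_fplus: "fin f \<Longrightarrow> fin g \<Longrightarrow> lincomb \<phi> (fplus f g) = lincomb \<phi> f + lincomb \<phi> g"
  by (simp add: fplus_def lincomb_add)

lemma lincomb_fscale: "fin f \<Longrightarrow> lincomb \<phi> (fscale c f) = c *\<^sub>C lincomb \<phi> f"
  by (simp add: fscale_def lincomb_scale)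

lemma fin_fsub: "fin f \<Longrightarrow> fin g \<Longrightarrow> fin (fsub f g)" unfolding fsub_def by (rule fin_diff)

lemma fin_fplus: "fin f \<Longrightarrow> fin g \<Longrightarrow> fin (fplus f g)" by (simp add: fplus_def fin_add)

lemma fin_fscale: "fin f \<Longrightarrow> fin (fscale c f)" by (simp add: fscale_def fin_scale)

lemma fin_simps[simp]: "fin (delta g)" "fin f \<Longrightarrow> fin g \<Longrightarrow> fin (fsub f g)" "fin f \<Longrightarrow> fin (fscale c f)"
  "fin f \<Longrightarrow> fin g \<Longrightarrow> fin (fplus f g)"
  by (auto simp: fin_delta fin_fsub fin_fscale fin_fplus)

lemma free_on_fin: "f \<in> free_on G \<Longrightarrow> fin f"
  by (simp add: free_on_def)

lemma delta_free_on: "g \<in> G \<Longrightarrow> delta g \<in> free_on G"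
  by (auto simp: free_on_def delta_def fin_delta)

lemma zero_free_on: "(\<lambda>_. 0) \<in> free_on G" by (simp add: free_on_def)

lemma free_on_fplus: "f \<in> free_on G \<Longrightarrow> g \<in> free_on G \<Longrightarrow> fplus f g \<in> free_on G"
  by (auto simp: free_on_def fplus_def intro: fin_add) (metis add.right_neutral)

lemma free_on_fscale: "f \<in> free_on G \<Longrightarrow> fscale c f \<in> free_on G"
  by (auto simp: free_on_def fscale_def intro: fin_scale)

lemma lin_ext_free_on: "f \<in> free_on G \<Longrightarrow> (\<And>g. g \<in> G \<Longrightarrow> \<Phi> g \<in> free_on H) \<Longrightarrow> lin_ext \<Phi> f \<in> free_on H"
proof -
  assume f: "f \<in> free_on G" and ph: "\<And>g. g \<in> G \<Longrightarrow> \<Phi> g \<in> free_on H"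
  have K: "finite {g. f g \<noteq> 0}" "{g. f g \<noteq> 0} \<subseteq> G" using f by (auto simp: free_on_def)
  have "fin (lin_ext \<Phi> f)" unfolding lin_ext_as_sum
    by (rule fin_sum) (use K ph in \<open>auto simp: free_on_def\<close>)
  moreover have "lin_ext \<Phi> f h \<noteq> 0 \<Longrightarrow> h \<in> H" for h
  proof (rule ccontr)
    assume "lin_ext \<Phi> f h \<noteq> 0" "h \<notin> H"
    moreover have "\<Phi> g h = 0" if "f g \<noteq> 0" for g using ph[of g] K that \<open>h \<notin> H\<close> by (auto simp: free_on_def)
    ultimately show False by (simp add: lin_ext_def)
  qed
  ultimately show ?thesis by (simp add: free_on_def)
qed

lemma lin_ext_delta_diff3: "lin_ext \<Phi> (fsub (fsub (delta a) (delta b)) (delta c)) = fsub (fsub (\<Phi> a) (\<Phi> b)) (\<Phi> c)"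
  by (simp add: lin_ext_fsub fin_delta fin_fsub)

lemma lin_ext_delta_diff: "lin_ext \<Phi> (fsub (delta a) (delta b)) = fsub (\<Phi> a) (\<Phi> b)"
  by (simp add: lin_ext_fsub fin_delta fin_fsub)

lemma lin_ext_delta_diff_scale: "lin_ext \<Phi> (fsub (delta a) (fscale z (delta b))) = fsub (\<Phi> a) (fscale z (\<Phi> b))"
  by (simp add: lin_ext_fsub fin_delta fin_fsub fin_fscale lin_ext_fscale)

lemma lincomb_delta_diff3: "lincomb \<phi> (fsub (fsub (delta a) (delta b)) (delta c)) = \<phi> a - \<phi> b - \<phi> c"
  by (simp add: lincomb_fsub fin_delta fin_fsub)

lemma lincomb_delta_diff: "lincomb \<phi> (fsub (delta a) (delta b)) = \<phi> a - \<phi> b"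
  by (simp add: lincomb_fsub fin_delta fin_fsub)

lemma lincomb_delta_diff_scale: "lincomb \<phi> (fsub (delta a) (fscale z (delta b))) = \<phi> a - z *\<^sub>C \<phi> b"
  by (simp add: lincomb_fsub fin_delta fin_fsub fin_fscale lincomb_fscale)

lemma fsub_self: "fsub f f = (\<lambda>_. 0)" by (simp add: fsub_def)

lemma fsub_zero: "fsub (\<lambda>_. 0) (\<lambda>_. 0) = (\<lambda>_. 0)" by (simp add: fsub_def)

lemma fscale_zero: "fscale z (\<lambda>_. 0) = (\<lambda>_. 0)" by (simp add: fscale_def)

lemma sum_delta_self: "fin f \<Longrightarrow> (\<Sum>g\<in>{g. f g \<noteq> 0}. f g * delta g h) = f h"
proof -
  assume "fin f"
  have "(\<Sum>g\<in>{g. f g \<noteq> 0}. f g * delta g h) = (\<Sum>g\<in>{g. f g \<noteq> 0}. if g = h then f g else 0)"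
    by (rule sum.cong) (auto simp: delta_def)
  also have "\<dots> = f h" using \<open>fin f\<close> by (simp add: sum.delta')
  finally show ?thesis .
qed

section \<open>Spans and quotient classes\<close>

lemma cspan_iff: "u \<in> cspan S \<longleftrightarrow> (\<exists>(n::nat) c v. u = (\<lambda>h. \<Sum>k<n. c k * v k h) \<and> (\<forall>k<n. v k \<in> S))"
  unfolding cspan_def by blast

lemma cspan_zero: "(\<lambda>_. 0) \<in> cspan S"
  unfolding cspan_iff by (rule exI[of _ 0]) auto

lemma cspan_add1: "u \<in> cspan S \<Longrightarrow> v \<in> S \<Longrightarrow> (\<lambda>h. u h + c * v h) \<in> cspan S"
proof -
  assume "u \<in> cspan S" "v \<in> S"
  then obtain n :: nat and c0 v0 where u: "u = (\<lambda>h. \<Sum>k<n. c0 k * v0 k h)" and vs: "\<forall>k<n. v0 k \<in> S"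
    unfolding cspan_iff by blast
  define c1 where "c1 = c0(n := c)"
  define v1 where "v1 = v0(n := v)"
  have "(\<lambda>h. u h + c * v h) = (\<lambda>h. \<Sum>k<Suc n. c1 k * v1 k h)"
    by (rule ext) (simp add: u c1_def v1_def)
  moreover have "\<forall>k<Suc n. v1 k \<in> S" using vs \<open>v \<in> S\<close> by (auto simp: v1_def less_Suc_eq)
  ultimately show ?thesis unfolding cspan_iff by blast
qed

lemma cspan_gen: "v \<in> S \<Longrightarrow> v \<in> cspan S"
  using cspan_add1[OF cspan_zero, of v S 1] by simp

lemma cspan_add: "u \<in> cspan S \<Longrightarrow> w \<in> cspan S \<Longrightarrow> (\<lambda>h. u h + w h) \<in> cspan S"
proof -
  assume u: "u \<in> cspan S" and "w \<in> cspan S"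
  then obtain n :: nat and c0 v0 where w: "w = (\<lambda>h. \<Sum>k<n. c0 k * v0 k h)" and vs: "\<forall>k<n. v0 k \<in> S"
    unfolding cspan_iff by blast
  have "\<forall>m\<le>n. (\<lambda>h. u h + (\<Sum>k<m. c0 k * v0 k h)) \<in> cspan S"
  proof (intro allI impI)
    fix m assume "m \<le> n"
    then show "(\<lambda>h. u h + (\<Sum>k<m. c0 k * v0 k h)) \<in> cspan S"
    proof (induction m)
      case 0 then show ?case using u by simp
    next
      case (Suc m)
      then have "(\<lambda>h. u h + (\<Sum>k<m. c0 k * v0 k h)) \<in> cspan S" by simp
      from cspan_add1[OF this, of "v0 m" "c0 m"] Suc.prems vs
      show ?case by (simp add: add.assoc)
    qed
  qed
  then show ?thesis using w by simp
qed

lemma cspan_scale: "u \<in> cspan S \<Longrightarrow> (\<lambda>h. c * u h) \<in> cspan S"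
proof -
  assume "u \<in> cspan S"
  then obtain n :: nat and c0 v0 where u: "u = (\<lambda>h. \<Sum>k<n. c0 k * v0 k h)" and vs: "\<forall>k<n. v0 k \<in> S"
    unfolding cspan_iff by blast
  have "(\<lambda>h. c * u h) = (\<lambda>h. \<Sum>k<n. (c * c0 k) * v0 k h)"
    by (rule ext) (simp add: u sum_distrib_left mult.assoc)
  then show ?thesis using vs unfolding cspan_iff by (intro exI[of _ n] exI[of _ "\<lambda>k. c * c0 k"] exI[of _ v0]) simp
qed

lemma cspan_diff: "u \<in> cspan S \<Longrightarrow> w \<in> cspan S \<Longrightarrow> (\<lambda>h. u h - w h) \<in> cspan S"
  using cspan_add[of u S "\<lambda>h. (-1) * w h"] cspan_scale[of w S "-1"] by simp

lemma cspan_sum: "finite K \<Longrightarrow> \<forall>k\<in>K. u k \<in> cspan S \<Longrightarrow> (\<lambda>h. \<Sum>k\<in>K. c k * u k h) \<in> cspan S"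
proof (induction K rule: finite_induct)
  case empty then show ?case using cspan_zero by simp
next
  case (insert k K)
  then show ?case using cspan_add[OF cspan_scale[of "u k" S "c k"], of "\<lambda>h. \<Sum>k\<in>K. c k * u k h"] by simp
qed

lemma cspan_fsub: "u \<in> cspan S \<Longrightarrow> w \<in> cspan S \<Longrightarrow> fsub u w \<in> cspan S"
  by (simp add: fsub_def cspan_diff)

lemma cspan_fplus: "u \<in> cspan S \<Longrightarrow> w \<in> cspan S \<Longrightarrow> fplus u w \<in> cspan S"
  by (simp add: fplus_def cspan_add)

lemma cspan_fscale: "u \<in> cspan S \<Longrightarrow> fscale c u \<in> cspan S"
  by (simp add: fscale_def cspan_scale)

lemma cspan_fin: "\<forall>v\<in>S. fin v \<Longrightarrow> u \<in> cspan S \<Longrightarrow> fin u"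
  unfolding cspan_iff by (auto intro!: fin_sum)

lemma lin_ext_cspan:
  assumes "\<forall>v\<in>S. fin v" "\<forall>v\<in>S. lin_ext \<Phi> v \<in> cspan S'" "u \<in> cspan S"
  shows "lin_ext \<Phi> u \<in> cspan S'"
proof -
  from assms(3) obtain n :: nat and c0 v0 where u: "u = (\<lambda>h. \<Sum>k<n. c0 k * v0 k h)" and vs: "\<forall>k<n. v0 k \<in> S"
    unfolding cspan_iff by blast
  have "lin_ext \<Phi> u = (\<lambda>h. \<Sum>k\<in>{..<n}. c0 k * lin_ext \<Phi> (v0 k) h)"
    unfolding u by (rule lin_ext_sum) (use vs assms(1) in auto)
  also have "\<dots> \<in> cspan S'" by (rule cspan_sum) (use vs assms(2) in auto)
  finally show ?thesis .
qed

lemma lincomb_cspan: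
  assumes "\<forall>v\<in>S. fin v" "\<forall>v\<in>S. lincomb \<phi> v = 0" "u \<in> cspan S"
  shows "lincomb \<phi> u = 0"
proof -
  from assms(3) obtain n :: nat and c0 v0 where u: "u = (\<lambda>h. \<Sum>k<n. c0 k * v0 k h)" and vs: "\<forall>k<n. v0 k \<in> S"
    unfolding cspan_iff by blast
  have "lincomb \<phi> u = (\<Sum>k\<in>{..<n}. c0 k *\<^sub>C lincomb \<phi> (v0 k))"
    unfolding u by (rule lincomb_sum) (use vs assms(1) in auto)
  also have "\<dots> = 0" using vs assms(2) by simp
  finally show ?thesis .
qed

lemma qcls_self: "f \<in> qcls (cspan S) f"
  by (simp add: qcls_def fsub_self cspan_zero)

lemma qcls_eq: "fsub f g \<in> cspan S \<Longrightarrow> qcls (cspan S) f = qcls (cspan S) g"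
proof -
  assume a: "fsub f g \<in> cspan S"
  have "fsub h f \<in> cspan S \<longleftrightarrow> fsub h g \<in> cspan S" for h
  proof
    assume "fsub h f \<in> cspan S"
    from cspan_fplus[OF this a] show "fsub h g \<in> cspan S" by (simp add: fsub_def fplus_def)
  next
    assume "fsub h g \<in> cspan S"
    from cspan_fsub[OF this a] show "fsub h f \<in> cspan S" by (simp add: fsub_def)
  qed
  then show ?thesis by (simp add: qcls_def)
qed

lemma qadd_qcls: "qadd (cspan S) (qcls (cspan S) f) (qcls (cspan S) g) = qcls (cspan S) (fplus f g)"
proof (rule set_eqI, rule iffI)
  fix h assume "h \<in> qadd (cspan S) (qcls (cspan S) f) (qcls (cspan S) g)"
  then obtain f' g' where "fsub f' f \<in> cspan S" "fsub g' g \<in> cspan S" "fsub h (fplus f' g') \<in> cspan S"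
    by (auto simp: qadd_def qcls_def)
  from cspan_fplus[OF this(3) cspan_fplus[OF this(1,2)]] show "h \<in> qcls (cspan S) (fplus f g)"
    by (simp add: qcls_def fsub_def fplus_def algebra_simps)
next
  fix h assume "h \<in> qcls (cspan S) (fplus f g)"
  then show "h \<in> qadd (cspan S) (qcls (cspan S) f) (qcls (cspan S) g)"
    unfolding qadd_def using qcls_self[of f S] qcls_self[of g S]
    by (intro CollectI bexI[of _ f] bexI[of _ g]) (auto simp: qcls_def)
qed

lemma qmap_qcls:
  assumes "\<And>f'. fsub f' f \<in> N \<Longrightarrow> fsub (\<Phi> f') (\<Phi> f) \<in> cspan S'"
    and "(\<lambda>_. 0) \<in> N"
  shows "qmap (cspan S') \<Phi> (qcls N f) = qcls (cspan S') (\<Phi> f)"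
proof (rule set_eqI, rule iffI)
  fix h assume "h \<in> qmap (cspan S') \<Phi> (qcls N f)"
  then obtain f' where "fsub f' f \<in> N" "fsub h (\<Phi> f') \<in> cspan S'"
    by (auto simp: qmap_def qcls_def)
  from cspan_fplus[OF this(2) assms(1)[OF this(1)]] show "h \<in> qcls (cspan S') (\<Phi> f)"
    by (simp add: qcls_def fsub_def fplus_def)
next
  fix h assume "h \<in> qcls (cspan S') (\<Phi> f)"
  moreover have "f \<in> qcls N f" using assms(2) by (simp add: qcls_def fsub_self)
  ultimately show "h \<in> qmap (cspan S') \<Phi> (qcls N f)"
    unfolding qmap_def by (auto simp: qcls_def)
qed

definition fp_rel_gens :: "('i \<Rightarrow> 'x::cvec set) \<Rightarrow> ('i \<Rightarrow> 'b::calg1 \<Rightarrow> 'x \<Rightarrow> 'x) \<Rightarrow> ('i \<Rightarrow> 'x \<Rightarrow> 'b \<Rightarrow> 'x)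
                    \<Rightarrow> ('i list \<times> 'x list \<Rightarrow> complex) set" where
  "fp_rel_gens C lm rm = (
      {fsub (fsub (delta (w, xs[k := x + y])) (delta (w, xs[k := x]))) (delta (w, xs[k := y]))
         | w xs k x y. (w, xs) \<in> fp_gen C \<and> k < length w \<and> x \<in> C (w ! k) \<and> y \<in> C (w ! k)}
    \<union> {fsub (delta (w, xs[k := z *\<^sub>C x])) (fscale z (delta (w, xs[k := x])))
         | w xs k x z. (w, xs) \<in> fp_gen C \<and> k < length w \<and> x \<in> C (w ! k)}
    \<union> {fsub (delta (w, xs[k := rm (w ! k) x b, Suc k := y]))
              (delta (w, xs[k := x, Suc k := lm (w ! Suc k) b y]))
         | w xs k x y b. (w, xs) \<in> fp_gen C \<and> Suc k < length w
              \<and> x \<in> C (w ! k) \<and> y \<in> C (w ! Suc k)})"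

lemma fp_rel_eq: "fp_rel C lm rm = cspan (fp_rel_gens C lm rm)"
  by (simp add: fp_rel_def fp_rel_gens_def)

definition tens_rel_gens where
  "tens_rel_gens M N S = (
      {fsub (fsub (delta (add M u u', v)) (delta (u, v))) (delta (u', v)) | u u' v.
          u \<in> car M \<and> u' \<in> car M \<and> v \<in> S}
    \<union> {fsub (fsub (delta (u, add N v v')) (delta (u, v))) (delta (u, v')) | u v v'.
          u \<in> car M \<and> v \<in> S \<and> v' \<in> S}
    \<union> {fsub (delta (scl M z u, v)) (fscale z (delta (u, v))) | u v z. u \<in> car M \<and> v \<in> S}
    \<union> {fsub (delta (u, scl N z v)) (fscale z (delta (u, v))) | u v z. u \<in> car M \<and> v \<in> S}
    \<union> {fsub (delta (rac M u b, v)) (delta (u, lac N b v)) | u v b. u \<in> car M \<and> v \<in> S})"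

lemma tens_rel_eq: "tens_rel M N S = cspan (tens_rel_gens M N S)"
  by (simp add: tens_rel_def tens_rel_gens_def)

lemma fp_rel_gens_fin: "\<forall>v\<in>fp_rel_gens C lm rm. fin v"
  unfolding fp_rel_gens_def by (auto intro!: fin_fsub fin_fscale fin_delta)

lemma tens_rel_gens_fin: "\<forall>v\<in>tens_rel_gens M N S. fin v"
  unfolding tens_rel_gens_def by (auto intro!: fin_fsub fin_fscale fin_delta)

definition lact_gen :: "('i \<Rightarrow> 'b \<Rightarrow> 'x \<Rightarrow> 'x) \<Rightarrow> 'b \<Rightarrow> 'i list \<times> 'x list \<Rightarrow> 'i list \<times> 'x list \<Rightarrow> complex" where
  "lact_gen lm a = (\<lambda>(w, xs). delta (w, xs[0 := lm (hd w) a (hd xs)]))"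

definition ract_gen :: "('i \<Rightarrow> 'x \<Rightarrow> 'b \<Rightarrow> 'x) \<Rightarrow> 'b \<Rightarrow> 'i list \<times> 'x list \<Rightarrow> 'i list \<times> 'x list \<Rightarrow> complex" where
  "ract_gen rm a = (\<lambda>(w, xs). delta (w, xs[length xs - 1 := rm (last w) (last xs) a]))"

definition restrict_single :: "'i \<Rightarrow> ('i list \<times> 'x list \<Rightarrow> complex) \<Rightarrow> 'i list \<times> 'x list \<Rightarrow> complex" where
  "restrict_single i f = (\<lambda>(w, xs). if w = [i] then f (w, xs) else 0)"

definition single_entry :: "'i \<Rightarrow> 'i list \<times> 'x::cvec list \<Rightarrow> 'x" where
  "single_entry i = (\<lambda>(w, xs). if w = [i] then hd xs else 0)"

lemma restrict_single_delta: "restrict_single i (delta (w, xs)) = (if w = [i] then delta (w, xs) else (\<lambda>_. 0))"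
  unfolding restrict_single_def delta_def by (rule ext) (auto split: prod.splits)

lemma restrict_single_fsub: "restrict_single i (fsub f g) = fsub (restrict_single i f) (restrict_single i g)"
  by (rule ext) (auto simp: restrict_single_def fsub_def)

lemma restrict_single_fscale: "restrict_single i (fscale z f) = fscale z (restrict_single i f)"
  by (rule ext) (auto simp: restrict_single_def fscale_def)

lemma alternating_tl: "alternating (j # w) \<Longrightarrow> alternating w"
  unfolding alternating_def
proof (intro allI impI)
  fix k assume "\<forall>k. Suc k < length (j # w) \<longrightarrow> (j # w) ! k \<noteq> (j # w) ! Suc k" "Suc k < length w"
  then show "w ! k \<noteq> w ! Suc k" by (auto dest: spec[of _ "Suc k"])
qed

lemma hd_update_0: "xs \<noteq> [] \<Longrightarrow> hd (xs[0 := v]) = v" by (cases xs) auto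

lemma tl_update_0: "tl (xs[0 := v]) = tl xs" by (cases xs) auto

lemma hd_update_Suc: "xs \<noteq> [] \<Longrightarrow> hd (xs[Suc k := v]) = hd xs" by (cases xs) auto

lemma tl_update_Suc: "tl (xs[Suc k := v]) = (tl xs)[k := v]" by (cases xs) auto

section \<open>The free product and the projection P_i\<close>

locale free_product =
  fixes C :: "'i \<Rightarrow> 'x::cvec set" and lm :: "'i \<Rightarrow> 'b::calg1 \<Rightarrow> 'x \<Rightarrow> 'x"
    and rm :: "'i \<Rightarrow> 'x \<Rightarrow> 'b \<Rightarrow> 'x" and i :: 'i
  assumes bm: "\<forall>j. bimod (C j) (lm j) (rm j)"
begin

lemma C_zero[simp]: "0 \<in> C j" using bm by (simp add: bimod_def)
lemma C_add[simp]: "x \<in> C j \<Longrightarrow> y \<in> C j \<Longrightarrow> x + y \<in> C j" using bm by (simp add: bimod_def)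
lemma C_scale[simp]: "x \<in> C j \<Longrightarrow> c *\<^sub>C x \<in> C j" using bm by (simp add: bimod_def)
lemma C_lm[simp]: "x \<in> C j \<Longrightarrow> lm j b x \<in> C j" using bm by (simp add: bimod_def)
lemma C_rm[simp]: "x \<in> C j \<Longrightarrow> rm j x b \<in> C j" using bm by (simp add: bimod_def)
lemma rm_one[simp]: "x \<in> C j \<Longrightarrow> rm j x 1 = x" using bm by (simp add: bimod_def)
lemma lm_rm_commute: "x \<in> C j \<Longrightarrow> lm j a (rm j x b) = rm j (lm j a x) b" using bm by (simp add: bimod_def)
lemma rm_rm_assoc: "x \<in> C j \<Longrightarrow> rm j (rm j x a) b = rm j x (a * b)" using bm by (simp add: bimod_def)
lemma lm_add: "x \<in> C j \<Longrightarrow> y \<in> C j \<Longrightarrow> lm j a (x + y) = lm j a x + lm j a y" using bm by (simp add: bimod_def)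
lemma rm_add_right: "x \<in> C j \<Longrightarrow> rm j x (a + b) = rm j x a + rm j x b" using bm by (simp add: bimod_def)
lemma rm_add_left: "x \<in> C j \<Longrightarrow> y \<in> C j \<Longrightarrow> rm j (x + y) a = rm j x a + rm j y a" using bm by (simp add: bimod_def)
lemma lm_scale: "x \<in> C j \<Longrightarrow> lm j b (c *\<^sub>C x) = c *\<^sub>C lm j b x" using bm by (simp add: bimod_def)
lemma rm_scale_right: "x \<in> C j \<Longrightarrow> rm j x (c *\<^sub>C b) = c *\<^sub>C rm j x b" using bm by (simp add: bimod_def)
lemma rm_scale_left: "x \<in> C j \<Longrightarrow> rm j (c *\<^sub>C x) b = c *\<^sub>C rm j x b" using bm by (simp add: bimod_def)

lemma rm_zero_right[simp]: "x \<in> C j \<Longrightarrow> rm j x 0 = 0"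
  using rm_add_right[of x j 0 0] by simp
lemma rm_zero_left[simp]: "rm j 0 b = 0"
  using rm_add_left[of 0 j 0 b] by simp
lemma lm_zero_right[simp]: "lm j b 0 = 0"
  using lm_add[of 0 j 0 b] by simp

lemma C_sum: "finite K \<Longrightarrow> \<forall>k\<in>K. x k \<in> C j \<Longrightarrow> (\<Sum>k\<in>K. c k *\<^sub>C x k) \<in> C j"
  by (induction K rule: finite_induct) auto

lemma lm_sum: "finite K \<Longrightarrow> \<forall>k\<in>K. x k \<in> C j \<Longrightarrow> lm j b (\<Sum>k\<in>K. c k *\<^sub>C x k) = (\<Sum>k\<in>K. c k *\<^sub>C lm j b (x k))"
  by (induction K rule: finite_induct) (auto simp: lm_add C_sum lm_scale)

lemma rm_sum: "finite K \<Longrightarrow> \<forall>k\<in>K. x k \<in> C j \<Longrightarrow> rm j (\<Sum>k\<in>K. c k *\<^sub>C x k) b = (\<Sum>k\<in>K. c k *\<^sub>C rm j (x k) b)"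
  by (induction K rule: finite_induct) (auto simp: rm_add_left C_sum rm_scale_left)

abbreviation "Rel \<equiv> fp_rel C lm rm"
abbreviation "Gens \<equiv> fp_gen C"
abbreviation "Rel_gens \<equiv> fp_rel_gens C lm rm"

lemma Rel_eq: "Rel = cspan Rel_gens" by (rule fp_rel_eq)

lemma Rel_add: "(w, xs) \<in> Gens \<Longrightarrow> k < length w \<Longrightarrow> x \<in> C (w ! k) \<Longrightarrow> y \<in> C (w ! k) \<Longrightarrow>
  fsub (fsub (delta (w, xs[k := x + y])) (delta (w, xs[k := x]))) (delta (w, xs[k := y])) \<in> Rel"
  unfolding Rel_eq by (rule cspan_gen) (unfold fp_rel_gens_def, blast)

lemma Rel_scale: "(w, xs) \<in> Gens \<Longrightarrow> k < length w \<Longrightarrow> x \<in> C (w ! k) \<Longrightarrow>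
  fsub (delta (w, xs[k := z *\<^sub>C x])) (fscale z (delta (w, xs[k := x]))) \<in> Rel"
  unfolding Rel_eq by (rule cspan_gen) (unfold fp_rel_gens_def, blast)

lemma Rel_balanced: "(w, xs) \<in> Gens \<Longrightarrow> Suc k < length w \<Longrightarrow> x \<in> C (w ! k) \<Longrightarrow> y \<in> C (w ! Suc k) \<Longrightarrow>
  fsub (delta (w, xs[k := rm (w ! k) x b, Suc k := y])) (delta (w, xs[k := x, Suc k := lm (w ! Suc k) b y])) \<in> Rel"
  unfolding Rel_eq by (rule cspan_gen) (unfold fp_rel_gens_def, blast)

lemma Rel_lin_ext:
  assumes h1: "\<And>w xs k x y. (w, xs) \<in> Gens \<Longrightarrow> k < length w \<Longrightarrow> x \<in> C (w ! k) \<Longrightarrow> y \<in> C (w ! k) \<Longrightarrow>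
      lin_ext \<Phi> (fsub (fsub (delta (w, xs[k := x + y])) (delta (w, xs[k := x]))) (delta (w, xs[k := y]))) \<in> cspan S'"
  and h2: "\<And>w xs k x z. (w, xs) \<in> Gens \<Longrightarrow> k < length w \<Longrightarrow> x \<in> C (w ! k) \<Longrightarrow>
      lin_ext \<Phi> (fsub (delta (w, xs[k := z *\<^sub>C x])) (fscale z (delta (w, xs[k := x])))) \<in> cspan S'"
  and h3: "\<And>w xs k x y b. (w, xs) \<in> Gens \<Longrightarrow> Suc k < length w \<Longrightarrow> x \<in> C (w ! k) \<Longrightarrow> y \<in> C (w ! Suc k) \<Longrightarrow>
      lin_ext \<Phi> (fsub (delta (w, xs[k := rm (w ! k) x b, Suc k := y])) (delta (w, xs[k := x, Suc k := lm (w ! Suc k) b y]))) \<in> cspan S'"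
  and n: "n \<in> Rel"
  shows "lin_ext \<Phi> n \<in> cspan S'"
proof (rule lin_ext_cspan[of Rel_gens])
  show "\<forall>v\<in>Rel_gens. fin v" by (rule fp_rel_gens_fin)
  show "\<forall>v\<in>Rel_gens. lin_ext \<Phi> v \<in> cspan S'"
    unfolding fp_rel_gens_def using h1 h2 h3 by blast
  show "n \<in> cspan Rel_gens" using n Rel_eq by simp
qed

lemma Rel_fin: "n \<in> Rel \<Longrightarrow> fin n"
  using cspan_fin[OF fp_rel_gens_fin] Rel_eq by auto

lemma Rel_zero: "(\<lambda>_. 0) \<in> Rel" using cspan_zero Rel_eq by simp
lemma Rel_fsub: "u \<in> Rel \<Longrightarrow> v \<in> Rel \<Longrightarrow> fsub u v \<in> Rel" using cspan_fsub Rel_eq by metis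
lemma Rel_fscale: "u \<in> Rel \<Longrightarrow> fscale c u \<in> Rel" using cspan_fscale Rel_eq by metis

lemma qcls_Rel_eq: "fsub f g \<in> Rel \<Longrightarrow> qcls Rel f = qcls Rel g"
  using qcls_eq[of f g Rel_gens] Rel_eq by simp
lemma qadd_Rel: "qadd Rel (qcls Rel f) (qcls Rel g) = qcls Rel (fplus f g)"
  using qadd_qcls[of Rel_gens f g] Rel_eq by simp
lemma qcls_Rel_zero: "qcls Rel (\<lambda>_. 0) = Rel"
  by (auto simp: qcls_def fsub_def)

lemma qscl_Rel: "qscl Rel z (qcls Rel f) = qcls Rel (fscale z f)"
proof -
  have "qmap (cspan Rel_gens) (fscale z) (qcls Rel f) = qcls (cspan Rel_gens) (fscale z f)"
  proof (rule qmap_qcls)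
    fix f' assume "fsub f' f \<in> Rel"
    from Rel_fscale[OF this, of z] show "fsub (fscale z f') (fscale z f) \<in> cspan Rel_gens"
      using Rel_eq by (simp add: fsub_def fscale_def right_diff_distrib)
  qed (rule Rel_zero)
  then show ?thesis using Rel_eq by (simp add: qscl_def)
qed

lemma qmap_lin_ext_Rel:
  assumes "\<And>n. n \<in> Rel \<Longrightarrow> lin_ext \<Phi> n \<in> Rel" "fin f"
  shows "qmap Rel (lin_ext \<Phi>) (qcls Rel f) = qcls Rel (lin_ext \<Phi> f)"
proof -
  have "qmap (cspan Rel_gens) (lin_ext \<Phi>) (qcls Rel f) = qcls (cspan Rel_gens) (lin_ext \<Phi> f)"
  proof (rule qmap_qcls)
    fix f' assume a: "fsub f' f \<in> Rel"
    have ff: "fin f'" proof -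
      have "f' = fplus (fsub f' f) f" by (auto simp: fsub_def fplus_def)
      then show ?thesis using Rel_fin[OF a] assms(2) by (metis fin_simps(4))
    qed
    have "fsub (lin_ext \<Phi> f') (lin_ext \<Phi> f) = lin_ext \<Phi> (fsub f' f)"
      using ff assms(2) by (simp add: lin_ext_fsub)
    then show "fsub (lin_ext \<Phi> f') (lin_ext \<Phi> f) \<in> cspan Rel_gens" using assms(1)[OF a] Rel_eq by simp
  next
    show "(\<lambda>_. 0) \<in> Rel" by (rule Rel_zero)
  qed
  then show ?thesis using Rel_eq by simp
qed

lemma qspace_mem: "f \<in> free_on Gens \<Longrightarrow> qcls Rel f \<in> qspace Gens Rel"
  by (simp add: qspace_def)

lemma Gens_iff: "(w, xs) \<in> Gens \<longleftrightarrow> w \<noteq> [] \<and> alternating w \<and> length xs = length w \<and> (\<forall>k<length w. xs ! k \<in> C (w ! k))"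
  by (simp add: fp_gen_def)

lemma Gens_length: "(w, xs) \<in> Gens \<Longrightarrow> length xs = length w \<and> w \<noteq> []" by (simp add: Gens_iff)

lemma Gens_nth: "(w, xs) \<in> Gens \<Longrightarrow> k < length w \<Longrightarrow> xs ! k \<in> C (w ! k)" by (simp add: Gens_iff)

lemma Gens_update: "(w, xs) \<in> Gens \<Longrightarrow> k < length w \<Longrightarrow> x \<in> C (w ! k) \<Longrightarrow> (w, xs[k := x]) \<in> Gens"
  by (auto simp: Gens_iff nth_list_update)

lemma Gens_Cons_tl: "(j # w, x # xs) \<in> Gens \<Longrightarrow> w \<noteq> [] \<Longrightarrow> (w, xs) \<in> Gens \<and> hd w \<noteq> j"
proof -
  assume a: "(j # w, x # xs) \<in> Gens" "w \<noteq> []"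
  then have alt: "alternating (j # w)" by (simp add: Gens_iff)
  then have "hd w \<noteq> j" using a(2) unfolding alternating_def
    by (cases w) (auto dest: spec[of _ 0])
  moreover have "(w, xs) \<in> Gens" using a alternating_tl[OF alt] unfolding Gens_iff
    by (auto dest: spec[of _ "Suc _"])
  ultimately show ?thesis by simp
qed

lemma Gens_single: "x \<in> C j \<Longrightarrow> ([j], [x]) \<in> Gens"
  by (simp add: Gens_iff alternating_def)

lemma Gens_single_iff: "([j], xs) \<in> Gens \<longleftrightarrow> (\<exists>x. xs = [x] \<and> x \<in> C j)"
  by (auto simp: Gens_iff alternating_def length_Suc_conv)

lemma Gens_tl: "(w, xs) \<in> Gens \<Longrightarrow> tl w \<noteq> [] \<Longrightarrow> (tl w, tl xs) \<in> Gens \<and> hd (tl w) \<noteq> hd w"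
  using Gens_Cons_tl[of "hd w" "tl w" "hd xs" "tl xs"] Gens_length[of w xs]
  by (cases w; cases xs) auto

lemma Gens_hd: "(w, xs) \<in> Gens \<Longrightarrow> hd xs \<in> C (hd w)"
  using Gens_nth[of w xs 0] Gens_length[of w xs] by (cases w; cases xs) auto

abbreviation "Xi \<equiv> Xmod C lm rm i"
abbreviation "Xfp \<equiv> FP C lm rm"

lemma car_Xfp: "car Xfp = UNIV \<times> qspace Gens Rel" by (simp add: FP_def Let_def)
lemma car_Xfp_cases: "v \<in> car Xfp \<Longrightarrow> \<exists>b f. v = (b, qcls Rel f) \<and> f \<in> free_on Gens"
  by (cases v) (auto simp: car_Xfp qspace_def)

lemma add_Xfp[simp]: "add Xfp (b, c) (b', c') = (b + b', qadd Rel c c')" by (simp add: FP_def Let_def)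
lemma scl_Xfp[simp]: "scl Xfp z (b, c) = (z *\<^sub>C b, qscl Rel z c)" by (simp add: FP_def Let_def)
lemma lac_Xfp[simp]: "lac Xfp a (b, c) = (a * b, qmap Rel (lin_ext (lact_gen lm a)) c)"
  by (simp add: FP_def Let_def lact_gen_def)
lemma rac_Xfp[simp]: "rac Xfp (b, c) a = (b * a, qmap Rel (lin_ext (ract_gen rm a)) c)"
  by (simp add: FP_def Let_def ract_gen_def)

lemma car_Xi: "car Xi = UNIV \<times> C i" by (simp add: Xmod_def)
lemma add_Xi[simp]: "add Xi (b, x) (b', x') = (b + b', x + x')" by (simp add: Xmod_def)
lemma scl_Xi[simp]: "scl Xi z (b, x) = (z *\<^sub>C b, z *\<^sub>C x)" by (simp add: Xmod_def)
lemma lac_Xi[simp]: "lac Xi a (b, x) = (a * b, lm i a x)" by (simp add: Xmod_def)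
lemma rac_Xi[simp]: "rac Xi (b, x) a = (b * a, rm i x a)" by (simp add: Xmod_def)

lemma add_Xi': "add Xi p q = (fst p + fst q, snd p + snd q)" by (cases p; cases q) simp

lemma scl_Xi': "scl Xi z p = (z *\<^sub>C fst p, z *\<^sub>C snd p)" by (cases p) simp

lemma lac_Xi': "lac Xi b p = (b * fst p, lm i b (snd p))" by (cases p) simp

lemma rac_Xi': "rac Xi p b = (fst p * b, rm i (snd p) b)" by (cases p) simp

lemma car_Xi': "p \<in> car Xi \<longleftrightarrow> snd p \<in> C i" by (cases p) (simp add: car_Xi)

lemma LopD:
  assumes "a \<in> Lop Xi"
  shows "\<And>u. u \<in> car Xi \<Longrightarrow> a u \<in> car Xi"
    and "\<And>u u'. u \<in> car Xi \<Longrightarrow> u' \<in> car Xi \<Longrightarrow> a (add Xi u u') = add Xi (a u) (a u')"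
    and "\<And>u z. u \<in> car Xi \<Longrightarrow> a (scl Xi z u) = scl Xi z (a u)"
    and "\<And>u b. u \<in> car Xi \<Longrightarrow> a (lac Xi b u) = lac Xi b (a u)"
    and "\<And>u b. u \<in> car Xi \<Longrightarrow> a (rac Xi u b) = rac Xi (a u) b"
  using assms unfolding Lop_def by auto

lemma Lop_comp: "a \<in> Lop Xi \<Longrightarrow> a' \<in> Lop Xi \<Longrightarrow> a \<circ> a' \<in> Lop Xi"
  unfolding Lop_def by auto

lemma Lop_add: "a \<in> Lop Xi \<Longrightarrow> a' \<in> Lop Xi \<Longrightarrow> (\<lambda>u. add Xi (a u) (a' u)) \<in> Lop Xi"
proof -
  assume a: "a \<in> Lop Xi" and a': "a' \<in> Lop Xi"
  note L = LopD[OF a] and L' = LopD[OF a']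
  have c: "snd (a u) \<in> C i" "snd (a' u) \<in> C i" if "u \<in> car Xi" for u
    using L(1)[OF that] L'(1)[OF that] by (simp_all add: car_Xi')
  show ?thesis unfolding Lop_def
  proof (intro CollectI conjI ballI allI)
    fix u assume u: "u \<in> car Xi"
    show "add Xi (a u) (a' u) \<in> car Xi" using c[OF u] by (simp add: car_Xi' add_Xi')
    fix z show "add Xi (a (scl Xi z u)) (a' (scl Xi z u)) = scl Xi z (add Xi (a u) (a' u))"
      using L(3)[OF u] L'(3)[OF u] by (simp add: add_Xi' scl_Xi' scaleC_add_right)
  next
    fix u u' assume u: "u \<in> car Xi" and u': "u' \<in> car Xi"
    show "add Xi (a (add Xi u u')) (a' (add Xi u u')) = add Xi (add Xi (a u) (a' u)) (add Xi (a u') (a' u'))"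
      using L(2)[OF u u'] L'(2)[OF u u'] by (simp add: add_Xi' ac_simps)
  next
    fix b u assume u: "u \<in> car Xi"
    show "add Xi (a (lac Xi b u)) (a' (lac Xi b u)) = lac Xi b (add Xi (a u) (a' u))"
      using L(4)[OF u] L'(4)[OF u] c[OF u] by (simp add: add_Xi' lac_Xi' lm_add distrib_left)
    show "add Xi (a (rac Xi u b)) (a' (rac Xi u b)) = rac Xi (add Xi (a u) (a' u)) b"
      using L(5)[OF u] L'(5)[OF u] c[OF u] by (simp add: add_Xi' rac_Xi' rm_add_left distrib_right)
  qed
qed

lemma Lop_scl: "a \<in> Lop Xi \<Longrightarrow> (\<lambda>u. scl Xi z (a u)) \<in> Lop Xi"
proof -
  assume a: "a \<in> Lop Xi"
  note L = LopD[OF a]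
  have c: "snd (a u) \<in> C i" if "u \<in> car Xi" for u
    using L(1)[OF that] by (simp_all add: car_Xi')
  show ?thesis unfolding Lop_def
  proof (intro CollectI conjI ballI allI)
    fix u assume u: "u \<in> car Xi"
    show "scl Xi z (a u) \<in> car Xi" using c[OF u] by (simp add: car_Xi' scl_Xi')
    fix z' show "scl Xi z (a (scl Xi z' u)) = scl Xi z' (scl Xi z (a u))"
      using L(3)[OF u] by (simp add: scl_Xi' scaleC_scaleC mult.commute)
  next
    fix u u' assume u: "u \<in> car Xi" and u': "u' \<in> car Xi"
    show "scl Xi z (a (add Xi u u')) = add Xi (scl Xi z (a u)) (scl Xi z (a u'))"
      using L(2)[OF u u'] by (simp add: add_Xi' scl_Xi' scaleC_add_right)
  next
    fix b u assume u: "u \<in> car Xi"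
    show "scl Xi z (a (lac Xi b u)) = lac Xi b (scl Xi z (a u))"
      using L(4)[OF u] c[OF u] by (simp add: scl_Xi' lac_Xi' lm_scale mult_scaleC_right)
    show "scl Xi z (a (rac Xi u b)) = rac Xi (scl Xi z (a u)) b"
      using L(5)[OF u] c[OF u] by (simp add: scl_Xi' rac_Xi' rm_scale_left mult_scaleC_left)
  qed
qed

lemma Lop_snd_in_C: "a \<in> Lop Xi \<Longrightarrow> x \<in> C i \<Longrightarrow> snd (a (b, x)) \<in> C i"
  using LopD(1)[of a "(b, x)"] by (simp add: car_Xi')

lemma Gens_update_hd: "(w, xs) \<in> Gens \<Longrightarrow> (w, xs[0 := lm (w ! 0) a (xs ! 0)]) \<in> Gens"
  using Gens_update[of w xs 0] Gens_nth[of w xs 0] Gens_length[of w xs] by auto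

lemma Gens_update_last:
  "(w, xs) \<in> Gens \<Longrightarrow> (w, xs[length w - 1 := rm (w ! (length w - 1)) (xs ! (length w - 1)) a]) \<in> Gens"
  using Gens_update[of w xs "length w - 1"] Gens_nth[of w xs "length w - 1"] Gens_length[of w xs] by auto

lemma lact_gen_update_hd: "(w, xs) \<in> Gens \<Longrightarrow> lact_gen lm a (w, xs[0 := v]) = delta (w, xs[0 := lm (w ! 0) a v])"
  using Gens_length[of w xs] by (cases xs; cases w) (auto simp: lact_gen_def)

lemma lact_gen_update: "(w, xs) \<in> Gens \<Longrightarrow> k \<noteq> 0 \<Longrightarrow>
  lact_gen lm a (w, xs[k := v]) = delta (w, xs[0 := lm (w ! 0) a (xs ! 0), k := v])"
  using Gens_length[of w xs] by (cases xs; cases w; cases k) (auto simp: lact_gen_def list_update_swap)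

lemma lact_gen_update2_hd: "(w, xs) \<in> Gens \<Longrightarrow>
  lact_gen lm a (w, xs[0 := v, Suc 0 := v']) = delta (w, xs[0 := lm (w ! 0) a v, Suc 0 := v'])"
  using Gens_length[of w xs] by (cases xs; cases w) (auto simp: lact_gen_def)

lemma lact_gen_update2: "(w, xs) \<in> Gens \<Longrightarrow> k \<noteq> 0 \<Longrightarrow>
  lact_gen lm a (w, xs[k := v, Suc k := v']) = delta (w, xs[0 := lm (w ! 0) a (xs ! 0), k := v, Suc k := v'])"
  using Gens_length[of w xs] by (cases xs; cases w; cases k) (auto simp: lact_gen_def list_update_swap)

lemma ract_gen_update_last: "(w, xs) \<in> Gens \<Longrightarrow>
  ract_gen rm a (w, xs[length w - Suc 0 := v]) = delta (w, xs[length w - Suc 0 := rm (w ! (length w - Suc 0)) v a])"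
  using Gens_length[of w xs] by (cases "xs = []") (auto simp: ract_gen_def last_list_update last_conv_nth)

lemma ract_gen_update: "(w, xs) \<in> Gens \<Longrightarrow> k \<noteq> length w - Suc 0 \<Longrightarrow>
  ract_gen rm a (w, xs[k := v]) = delta (w, xs[length w - Suc 0 := rm (w ! (length w - Suc 0)) (xs ! (length w - Suc 0)) a, k := v])"
  using Gens_length[of w xs] by (cases "xs = []") (auto simp: ract_gen_def last_list_update last_conv_nth list_update_swap)

lemma ract_gen_update2_last: "(w, xs) \<in> Gens \<Longrightarrow> Suc k = length w - 1 \<Longrightarrow>
  ract_gen rm a (w, xs[k := v, Suc k := v']) = delta (w, xs[k := v, Suc k := rm (w ! Suc k) v' a])"
  using Gens_length[of w xs] by (cases "xs = []") (auto simp: ract_gen_def last_list_update last_conv_nth)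

lemma ract_gen_update2: "(w, xs) \<in> Gens \<Longrightarrow> Suc k < length w \<Longrightarrow> Suc k \<noteq> length w - Suc 0 \<Longrightarrow>
  ract_gen rm a (w, xs[k := v, Suc k := v']) = delta (w, xs[length w - Suc 0 := rm (w ! (length w - Suc 0)) (xs ! (length w - Suc 0)) a, k := v, Suc k := v'])"
  using Gens_length[of w xs] by (cases "xs = []") (auto simp: ract_gen_def last_list_update last_conv_nth list_update_swap)

lemma Rel_lact: "n \<in> Rel \<Longrightarrow> lin_ext (lact_gen lm a) n \<in> Rel"
proof (rule Rel_lin_ext[where S'=Rel_gens, unfolded Rel_eq[symmetric]])
  fix w xs k x y assume g: "(w, xs) \<in> Gens" and k: "k < length w" and x: "x \<in> C (w ! k)" and y: "y \<in> C (w ! k)"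
  show "lin_ext (lact_gen lm a) (fsub (fsub (delta (w, xs[k := x + y])) (delta (w, xs[k := x]))) (delta (w, xs[k := y]))) \<in> Rel"
  proof (cases "k = 0")
    case True
    then show ?thesis using Rel_add[OF g k C_lm[OF x, of a] C_lm[OF y, of a]] x y
      by (simp add: lin_ext_delta_diff3 lact_gen_update_hd[OF g] True lm_add)
  next
    case False
    note g' = Gens_update_hd[OF g, of a]
    show ?thesis using Rel_add[OF g' k, of x y] x y False
      by (simp add: lin_ext_delta_diff3 lact_gen_update[OF g False] nth_list_update)
  qed
next
  fix w xs k x z assume g: "(w, xs) \<in> Gens" and k: "k < length w" and x: "x \<in> C (w ! k)"
  show "lin_ext (lact_gen lm a) (fsub (delta (w, xs[k := z *\<^sub>C x])) (fscale z (delta (w, xs[k := x])))) \<in> Rel"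
  proof (cases "k = 0")
    case True
    then show ?thesis using Rel_scale[OF g k C_lm[OF x, of a], of z] x
      by (simp add: lin_ext_delta_diff_scale lact_gen_update_hd[OF g] True lm_scale)
  next
    case False
    note g' = Gens_update_hd[OF g, of a]
    show ?thesis using Rel_scale[OF g' k, of x z] x False
      by (simp add: lin_ext_delta_diff_scale lact_gen_update[OF g False] nth_list_update)
  qed
next
  fix w xs k x y b assume g: "(w, xs) \<in> Gens" and k: "Suc k < length w" and x: "x \<in> C (w ! k)" and y: "y \<in> C (w ! Suc k)"
  show "lin_ext (lact_gen lm a) (fsub (delta (w, xs[k := rm (w ! k) x b, Suc k := y])) (delta (w, xs[k := x, Suc k := lm (w ! Suc k) b y]))) \<in> Rel"
  proof (cases "k = 0")
    case True
    then show ?thesis using Rel_balanced[OF g k C_lm[OF x, of a] y, of b] x y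
      by (simp add: lin_ext_delta_diff lact_gen_update2_hd[OF g] True lm_rm_commute)
  next
    case False
    note g' = Gens_update_hd[OF g, of a]
    show ?thesis using Rel_balanced[OF g' k x y, of b] False
      by (simp add: lin_ext_delta_diff lact_gen_update2[OF g False])
  qed
qed

lemma Rel_ract: "n \<in> Rel \<Longrightarrow> lin_ext (ract_gen rm a) n \<in> Rel"
proof (rule Rel_lin_ext[where S'=Rel_gens, unfolded Rel_eq[symmetric]])
  fix w xs k x y assume g: "(w, xs) \<in> Gens" and k: "k < length w" and x: "x \<in> C (w ! k)" and y: "y \<in> C (w ! k)"
  show "lin_ext (ract_gen rm a) (fsub (fsub (delta (w, xs[k := x + y])) (delta (w, xs[k := x]))) (delta (w, xs[k := y]))) \<in> Rel"
  proof (cases "k = length w - 1")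
    case True
    then show ?thesis using Rel_add[OF g k C_rm[OF x, of a] C_rm[OF y, of a]] x y
      by (simp add: lin_ext_delta_diff3 ract_gen_update_last[OF g] True rm_add_left)
  next
    case False
    note g' = Gens_update_last[OF g, of a]
    show ?thesis using Rel_add[OF g' k, of x y] x y False
      by (simp add: lin_ext_delta_diff3 ract_gen_update[OF g] False)
  qed
next
  fix w xs k x z assume g: "(w, xs) \<in> Gens" and k: "k < length w" and x: "x \<in> C (w ! k)"
  show "lin_ext (ract_gen rm a) (fsub (delta (w, xs[k := z *\<^sub>C x])) (fscale z (delta (w, xs[k := x])))) \<in> Rel"
  proof (cases "k = length w - 1")
    case True
    then show ?thesis using Rel_scale[OF g k C_rm[OF x, of a], of z] x
      by (simp add: lin_ext_delta_diff_scale ract_gen_update_last[OF g] True rm_scale_left)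
  next
    case False
    note g' = Gens_update_last[OF g, of a]
    show ?thesis using Rel_scale[OF g' k, of x z] x False
      by (simp add: lin_ext_delta_diff_scale ract_gen_update[OF g] False)
  qed
next
  fix w xs k x y b assume g: "(w, xs) \<in> Gens" and k: "Suc k < length w" and x: "x \<in> C (w ! k)" and y: "y \<in> C (w ! Suc k)"
  show "lin_ext (ract_gen rm a) (fsub (delta (w, xs[k := rm (w ! k) x b, Suc k := y])) (delta (w, xs[k := x, Suc k := lm (w ! Suc k) b y]))) \<in> Rel"
  proof (cases "Suc k = length w - 1")
    case True
    show ?thesis unfolding lin_ext_delta_diff ract_gen_update2_last[OF g True] using Rel_balanced[OF g k x C_rm[OF y, of a], of b] x y
      by (simp add: lm_rm_commute)
  next
    case False
    note g' = Gens_update_last[OF g, of a]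
    show ?thesis using Rel_balanced[OF g' k x y, of b] False
      by (simp add: lin_ext_delta_diff ract_gen_update2[OF g k] False)
  qed
qed

lemma Rel_restrict: "n \<in> Rel \<Longrightarrow> restrict_single i n \<in> Rel"
proof -
  assume "n \<in> Rel"
  then obtain m :: nat and c v where n: "n = (\<lambda>h. \<Sum>k<m. c k * v k h)" and vs: "\<forall>k<m. v k \<in> Rel_gens"
    unfolding Rel_eq cspan_iff by blast
  have e: "restrict_single i n = (\<lambda>h. \<Sum>k\<in>{..<m}. c k * restrict_single i (v k) h)"
    by (rule ext) (auto simp: n restrict_single_def)
  have d: "restrict_single i v = v \<or> restrict_single i v = (\<lambda>_. 0)" if "v \<in> Rel_gens" for v
    using that unfolding fp_rel_gens_def
    by (auto simp: restrict_single_fsub restrict_single_fscale restrict_single_delta fsub_zero fscale_zero)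
  have "restrict_single i v \<in> cspan Rel_gens" if "v \<in> Rel_gens" for v
    using d[OF that] cspan_gen[OF that] cspan_zero[of Rel_gens] by auto
  then show ?thesis unfolding e Rel_eq by (intro cspan_sum) (use vs in auto)
qed

lemma single_entry_in_C: "g \<in> Gens \<Longrightarrow> single_entry i g \<in> C i"
  by (cases g) (auto simp: single_entry_def Gens_single_iff)

lemma Rel_single_zero: "fsub (\<lambda>_. 0) (delta ([j], [0])) \<in> Rel"
proof -
  have "fsub (delta ([j], [0][0 := 0 *\<^sub>C 0])) (fscale 0 (delta ([j], [0][0 := 0]))) \<in> Rel"
    by (rule Rel_scale) (auto simp: Gens_single)
  from Rel_fscale[OF this, of "-1"] show ?thesis
    by (simp add: fsub_def fscale_def)
qed

lemma Rel_single_step: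
  assumes X: "X \<in> C j" and x: "x \<in> C j" and A: "fsub A (delta ([j], [X])) \<in> Rel"
  shows "fsub (\<lambda>h. c * delta ([j], [x]) h + A h) (delta ([j], [X + c *\<^sub>C x])) \<in> Rel"
proof -
  have add: "fsub (fsub (delta ([j], [X + c *\<^sub>C x])) (delta ([j], [X]))) (delta ([j], [c *\<^sub>C x])) \<in> Rel"
    using Rel_add[OF Gens_single[OF X], of 0 X "c *\<^sub>C x"] X x by simp
  have scale: "fsub (delta ([j], [c *\<^sub>C x])) (fscale c (delta ([j], [x]))) \<in> Rel"
    using Rel_scale[OF Gens_single[OF x], of 0 x c] x by simp
  have "fsub (\<lambda>h. c * delta ([j], [x]) h + A h) (delta ([j], [X + c *\<^sub>C x]))
      = fsub (fsub (fsub A (delta ([j], [X])))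
          (fsub (fsub (delta ([j], [X + c *\<^sub>C x])) (delta ([j], [X]))) (delta ([j], [c *\<^sub>C x]))))
          (fsub (delta ([j], [c *\<^sub>C x])) (fscale c (delta ([j], [x]))))"
    unfolding fsub_def fscale_def by (rule ext) (simp only: algebra_simps)
  then show ?thesis using Rel_fsub[OF Rel_fsub[OF A add] scale] by simp
qed

lemma restrict_single_sum:
  "finite K \<Longrightarrow> K \<subseteq> Gens \<Longrightarrow> (\<Sum>g\<in>K. c g *\<^sub>C single_entry i g) \<in> C i \<and>
   fsub (\<lambda>h. \<Sum>g\<in>K. c g * restrict_single i (delta g) h) (delta ([i], [\<Sum>g\<in>K. c g *\<^sub>C single_entry i g])) \<in> Rel"
proof (induction K rule: finite_induct)
  case empty
  then show ?case using Rel_single_zero by simp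
next
  case (insert g K)
  let ?X = "\<Sum>g\<in>K. c g *\<^sub>C single_entry i g"
  have IH: "?X \<in> C i" "fsub (\<lambda>h. \<Sum>g\<in>K. c g * restrict_single i (delta g) h) (delta ([i], [?X])) \<in> Rel"
    using insert by auto
  obtain w xs where g: "g = (w, xs)" by fastforce
  show ?case
  proof (cases "w = [i]")
    case False
    then have "single_entry i g = 0" "restrict_single i (delta g) = (\<lambda>_. 0)"
      by (auto simp: g single_entry_def restrict_single_delta)
    then show ?thesis using IH insert by simp
  next
    case True
    then obtain x where xs: "xs = [x]" and x: "x \<in> C i" using insert(4) g Gens_single_iff by auto
    have "single_entry i g = x" "restrict_single i (delta g) = delta ([i], [x])"
      by (auto simp: g True xs single_entry_def restrict_single_delta)
    then show ?thesis
      using insert(1,2) Rel_single_step[OF IH(1) x IH(2), of "c g"] IH(1) x by (simp add: add.commute)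
  qed
qed

lemma restrict_single_equiv: "f \<in> free_on Gens \<Longrightarrow> lincomb (single_entry i) f \<in> C i \<and> fsub (restrict_single i f) (delta ([i], [lincomb (single_entry i) f])) \<in> Rel"
proof -
  assume f: "f \<in> free_on Gens"
  have K: "finite {g. f g \<noteq> 0}" "{g. f g \<noteq> 0} \<subseteq> Gens" using f by (auto simp: free_on_def)
  have e: "restrict_single i f = (\<lambda>h. \<Sum>g\<in>{g. f g \<noteq> 0}. f g * restrict_single i (delta g) h)"
  proof (rule ext)
    fix h
    show "restrict_single i f h = (\<Sum>g\<in>{g. f g \<noteq> 0}. f g * restrict_single i (delta g) h)"
      using sum_delta_self[OF K(1), of h] by (cases h) (auto simp: restrict_single_def delta_def)
  qed
  show ?thesis using restrict_single_sum[OF K, of f] unfolding e lincomb_def by simp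
qed

lemma restrict_single_def': "(\<lambda>f (w, xs). if w = [i] then f (w, xs) else 0) = restrict_single i"
  by (rule ext)+ (simp add: restrict_single_def)

lemma P_i_qcls: "fin f \<Longrightarrow> P_i C lm rm i (b, qcls Rel f) = (b, qcls Rel (restrict_single i f))"
proof -
  have "qmap (cspan Rel_gens) (restrict_single i) (qcls Rel f) = qcls (cspan Rel_gens) (restrict_single i f)"
  proof (rule qmap_qcls)
    fix f' assume "fsub f' f \<in> Rel"
    from Rel_restrict[OF this] show "fsub (restrict_single i f') (restrict_single i f) \<in> cspan Rel_gens" using Rel_eq by (simp add: restrict_single_fsub)
  qed (rule Rel_zero)
  then show ?thesis unfolding P_i_def restrict_single_def' using Rel_eq by simp
qed

abbreviation "single_coord f \<equiv> lincomb (single_entry i) f"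

lemma single_coord_in_C: "f \<in> free_on Gens \<Longrightarrow> single_coord f \<in> C i"
  using restrict_single_equiv by blast

lemma lact_gen_Gens: "g \<in> Gens \<Longrightarrow> lact_gen lm b g \<in> free_on Gens"
proof (cases g)
  case (Pair w xs)
  moreover assume "g \<in> Gens"
  moreover from calculation have "xs \<noteq> []" using Gens_length by fastforce
  ultimately show ?thesis
    using Gens_length Gens_update_hd[of w xs b] by (simp add: lact_gen_def delta_free_on hd_conv_nth)
qed

lemma ract_gen_Gens: "g \<in> Gens \<Longrightarrow> ract_gen rm b g \<in> free_on Gens"
proof (cases g)
  case (Pair w xs)
  moreover assume "g \<in> Gens"
  moreover from calculation have "xs \<noteq> []" using Gens_length by fastforce
  ultimately show ?thesis
    using Gens_length Gens_update_last[of w xs b] by (simp add: ract_gen_def delta_free_on last_conv_nth)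
qed

lemma single_coord_lm: "f \<in> free_on Gens \<Longrightarrow> lm i b (single_coord f) = lincomb (\<lambda>g. lm i b (single_entry i g)) f"
proof -
  assume f: "f \<in> free_on Gens"
  have K: "finite {g. f g \<noteq> 0}" "{g. f g \<noteq> 0} \<subseteq> Gens" using f by (auto simp: free_on_def)
  show ?thesis unfolding lincomb_def by (rule lm_sum[OF K(1)]) (use K single_entry_in_C in auto)
qed

lemma single_coord_rm: "f \<in> free_on Gens \<Longrightarrow> rm i (single_coord f) b = lincomb (\<lambda>g. rm i (single_entry i g) b) f"
proof -
  assume f: "f \<in> free_on Gens"
  have K: "finite {g. f g \<noteq> 0}" "{g. f g \<noteq> 0} \<subseteq> Gens" using f by (auto simp: free_on_def)
  show ?thesis unfolding lincomb_def by (rule rm_sum[OF K(1)]) (use K single_entry_in_C in auto)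
qed

lemma single_coord_lact: "f \<in> free_on Gens \<Longrightarrow> single_coord (lin_ext (lact_gen lm b) f) = lm i b (single_coord f)"
proof -
  assume f: "f \<in> free_on Gens"
  have ff: "fin f" using f by (rule free_on_fin)
  have aL: "\<forall>g. fin (lact_gen lm b g)" by (auto simp: lact_gen_def fin_delta)
  have "single_coord (lin_ext (lact_gen lm b) f) = lincomb (\<lambda>g. single_coord (lact_gen lm b g)) f" by (rule lincomb_lin_ext[OF ff aL])
  also have "\<dots> = lincomb (\<lambda>g. lm i b (single_entry i g)) f"
  proof (rule lincomb_cong)
    fix g assume "f g \<noteq> 0"
    then have g: "g \<in> Gens" using f unfolding free_on_def by blast
    obtain w xs where gw: "g = (w, xs)" by fastforce
    have ne: "xs \<noteq> []" using Gens_length[of w xs] g gw by auto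
    show "single_coord (lact_gen lm b g) = lm i b (single_entry i g)"
      using ne by (cases xs) (auto simp: gw lact_gen_def single_entry_def)
  qed
  also have "\<dots> = lm i b (single_coord f)" using single_coord_lm[OF f] by simp
  finally show ?thesis .
qed

lemma single_coord_ract: "f \<in> free_on Gens \<Longrightarrow> single_coord (lin_ext (ract_gen rm b) f) = rm i (single_coord f) b"
proof -
  assume f: "f \<in> free_on Gens"
  have ff: "fin f" using f by (rule free_on_fin)
  have aR: "\<forall>g. fin (ract_gen rm b g)" by (auto simp: ract_gen_def fin_delta)
  have "single_coord (lin_ext (ract_gen rm b) f) = lincomb (\<lambda>g. single_coord (ract_gen rm b g)) f" by (rule lincomb_lin_ext[OF ff aR])
  also have "\<dots> = lincomb (\<lambda>g. rm i (single_entry i g) b) f"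
  proof (rule lincomb_cong)
    fix g assume "f g \<noteq> 0"
    then have g: "g \<in> Gens" using f unfolding free_on_def by blast
    obtain w xs where gw: "g = (w, xs)" by fastforce
    have ne: "length xs = length w" "w \<noteq> []" using Gens_length[of w xs] g gw by auto
    show "single_coord (ract_gen rm b g) = rm i (single_entry i g) b"
    proof (cases "w = [i]")
      case True
      then obtain x where "xs = [x]" using ne by (cases xs) auto
      then show ?thesis by (simp add: gw ract_gen_def single_entry_def True)
    next
      case False
      then show ?thesis by (simp add: gw ract_gen_def single_entry_def)
    qed
  qed
  also have "\<dots> = rm i (single_coord f) b" using single_coord_rm[OF f] by simp
  finally show ?thesis .
qed

section \<open>The tensor product and the isomorphism V_i\<close>

abbreviation "Xsub_i \<equiv> Xsub C lm rm i"
abbreviation "TRel \<equiv> Ti_rel C lm rm i"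
abbreviation "TRel_gens \<equiv> tens_rel_gens Xi Xfp Xsub_i"

abbreviation "unit_Xsub \<equiv> (1::'b, Rel)"

lemma TRel_eq: "TRel = cspan TRel_gens" by (simp add: Ti_rel_def tens_rel_eq)

lemma TRel_add_left: "u \<in> car Xi \<Longrightarrow> u' \<in> car Xi \<Longrightarrow> v \<in> Xsub_i \<Longrightarrow>
   fsub (fsub (delta (add Xi u u', v)) (delta (u, v))) (delta (u', v)) \<in> TRel"
  unfolding TRel_eq by (rule cspan_gen) (unfold tens_rel_gens_def, blast)
lemma TRel_add_right: "u \<in> car Xi \<Longrightarrow> v \<in> Xsub_i \<Longrightarrow> v' \<in> Xsub_i \<Longrightarrow>
   fsub (fsub (delta (u, add Xfp v v')) (delta (u, v))) (delta (u, v')) \<in> TRel"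
  unfolding TRel_eq by (rule cspan_gen) (unfold tens_rel_gens_def, blast)
lemma TRel_scale_left: "u \<in> car Xi \<Longrightarrow> v \<in> Xsub_i \<Longrightarrow>
   fsub (delta (scl Xi z u, v)) (fscale z (delta (u, v))) \<in> TRel"
  unfolding TRel_eq by (rule cspan_gen) (unfold tens_rel_gens_def, blast)
lemma TRel_scale_right: "u \<in> car Xi \<Longrightarrow> v \<in> Xsub_i \<Longrightarrow>
   fsub (delta (u, scl Xfp z v)) (fscale z (delta (u, v))) \<in> TRel"
  unfolding TRel_eq by (rule cspan_gen) (unfold tens_rel_gens_def, blast)
lemma TRel_balanced: "u \<in> car Xi \<Longrightarrow> v \<in> Xsub_i \<Longrightarrow>
   fsub (delta (rac Xi u b, v)) (delta (u, lac Xfp b v)) \<in> TRel"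
  unfolding TRel_eq by (rule cspan_gen) (unfold tens_rel_gens_def, blast)

lemma TRel_zero: "(\<lambda>_. 0) \<in> TRel" using cspan_zero TRel_eq by simp
lemma TRel_fplus: "u \<in> TRel \<Longrightarrow> v \<in> TRel \<Longrightarrow> fplus u v \<in> TRel" using cspan_fplus TRel_eq by metis
lemma TRel_fin: "n \<in> TRel \<Longrightarrow> fin n" using cspan_fin[OF tens_rel_gens_fin] TRel_eq by auto
lemma qcls_TRel_eq: "fsub f g \<in> TRel \<Longrightarrow> qcls TRel f = qcls TRel g"
  using qcls_eq[of f g TRel_gens] TRel_eq by simp
lemma qcls_TRel_self: "f \<in> qcls TRel f"
  using qcls_self[of f TRel_gens] TRel_eq by simp

lemma TRel_lin_ext:
  assumes h1: "\<And>u u' v. u \<in> car Xi \<Longrightarrow> u' \<in> car Xi \<Longrightarrow> v \<in> Xsub_i \<Longrightarrow>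
     lin_ext \<Phi> (fsub (fsub (delta (add Xi u u', v)) (delta (u, v))) (delta (u', v))) \<in> TRel"
  and h2: "\<And>u v v'. u \<in> car Xi \<Longrightarrow> v \<in> Xsub_i \<Longrightarrow> v' \<in> Xsub_i \<Longrightarrow>
     lin_ext \<Phi> (fsub (fsub (delta (u, add Xfp v v')) (delta (u, v))) (delta (u, v'))) \<in> TRel"
  and h3: "\<And>u v z. u \<in> car Xi \<Longrightarrow> v \<in> Xsub_i \<Longrightarrow>
     lin_ext \<Phi> (fsub (delta (scl Xi z u, v)) (fscale z (delta (u, v)))) \<in> TRel"
  and h4: "\<And>u v z. u \<in> car Xi \<Longrightarrow> v \<in> Xsub_i \<Longrightarrow>
     lin_ext \<Phi> (fsub (delta (u, scl Xfp z v)) (fscale z (delta (u, v)))) \<in> TRel"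
  and h5: "\<And>u v b. u \<in> car Xi \<Longrightarrow> v \<in> Xsub_i \<Longrightarrow>
     lin_ext \<Phi> (fsub (delta (rac Xi u b, v)) (delta (u, lac Xfp b v))) \<in> TRel"
  and t: "t \<in> TRel"
  shows "lin_ext \<Phi> t \<in> TRel"
proof -
  have "lin_ext \<Phi> t \<in> cspan TRel_gens"
  proof (rule lin_ext_cspan[of TRel_gens])
    show "\<forall>v\<in>TRel_gens. fin v" by (rule tens_rel_gens_fin)
    show "\<forall>v\<in>TRel_gens. lin_ext \<Phi> v \<in> cspan TRel_gens"
      unfolding TRel_eq[symmetric] using h1 h2 h3 h4 h5 by (unfold tens_rel_gens_def) blast
    show "t \<in> cspan TRel_gens" using t TRel_eq by simp
  qed
  then show ?thesis using TRel_eq by simp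
qed

lemma TRel_lincomb:
  assumes h1: "\<And>u u' v. u \<in> car Xi \<Longrightarrow> u' \<in> car Xi \<Longrightarrow> v \<in> Xsub_i \<Longrightarrow>
     \<phi> (add Xi u u', v) - \<phi> (u, v) - \<phi> (u', v) = 0"
  and h2: "\<And>u v v'. u \<in> car Xi \<Longrightarrow> v \<in> Xsub_i \<Longrightarrow> v' \<in> Xsub_i \<Longrightarrow>
     \<phi> (u, add Xfp v v') - \<phi> (u, v) - \<phi> (u, v') = 0"
  and h3: "\<And>u v z. u \<in> car Xi \<Longrightarrow> v \<in> Xsub_i \<Longrightarrow>
     \<phi> (scl Xi z u, v) - z *\<^sub>C \<phi> (u, v) = 0"
  and h4: "\<And>u v z. u \<in> car Xi \<Longrightarrow> v \<in> Xsub_i \<Longrightarrow>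
     \<phi> (u, scl Xfp z v) - z *\<^sub>C \<phi> (u, v) = 0"
  and h5: "\<And>u v b. u \<in> car Xi \<Longrightarrow> v \<in> Xsub_i \<Longrightarrow>
     \<phi> (rac Xi u b, v) - \<phi> (u, lac Xfp b v) = 0"
  and t: "t \<in> TRel"
  shows "lincomb \<phi> t = 0"
proof (rule lincomb_cspan[of TRel_gens])
  show "\<forall>v\<in>TRel_gens. fin v" by (rule tens_rel_gens_fin)
  show "\<forall>v\<in>TRel_gens. lincomb \<phi> v = 0"
    unfolding tens_rel_gens_def using h1 h2 h3 h4 h5 by (auto simp: lincomb_delta_diff3 lincomb_delta_diff lincomb_delta_diff_scale)
  show "t \<in> cspan TRel_gens" using t TRel_eq by simp
qed

lemma Xsub_unit: "(b, Rel) \<in> Xsub_i"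
proof -
  have "Rel = qcls Rel (\<lambda>_. 0)" by (simp add: qcls_Rel_zero)
  then have "Rel \<in> qspace Gens Rel" using qspace_mem[OF zero_free_on] by simp
  moreover have "(\<lambda>_. 0) \<in> Rel" by (rule Rel_zero)
  ultimately show ?thesis unfolding Xsub_def using zero_free_on by blast
qed

lemma Xsub_qcls: "(w, xs) \<in> Gens \<Longrightarrow> hd w \<noteq> i \<Longrightarrow> (b, qcls Rel (delta (w, xs))) \<in> Xsub_i"
proof -
  assume g: "(w, xs) \<in> Gens" "hd w \<noteq> i"
  have "delta (w, xs) \<in> free_on {(w, xs) \<in> Gens. hd w \<noteq> i}" by (rule delta_free_on) (use g in simp)
  moreover have "delta (w, xs) \<in> qcls Rel (delta (w, xs))" by (simp add: qcls_def fsub_self Rel_zero)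
  ultimately show ?thesis unfolding Xsub_def using qspace_mem[OF delta_free_on[OF g(1)]] by blast
qed

lemma V_gen_not_i: "hd w \<noteq> i \<Longrightarrow> V_gen C lm rm i (w, xs) = delta ((1, 0), (0, qcls Rel (delta (w, xs))))"
  by (simp add: V_gen_def Let_def)
lemma V_gen_single: "hd w = i \<Longrightarrow> tl w = [] \<Longrightarrow> V_gen C lm rm i (w, xs) = delta ((0, hd xs), (1, Rel))"
  by (simp add: V_gen_def Let_def)
lemma V_gen_Cons_i: "hd w = i \<Longrightarrow> tl w \<noteq> [] \<Longrightarrow> V_gen C lm rm i (w, xs) = delta ((0, hd xs), (0, qcls Rel (delta (tl w, tl xs))))"
  by (simp add: V_gen_def Let_def)

lemma TRel_qcls_cong: "fsub f g \<in> Rel \<Longrightarrow> fsub (delta (u, (b, qcls Rel f))) (delta (u, (b, qcls Rel g))) \<in> TRel"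
  using qcls_Rel_eq[of f g] by (simp add: fsub_self TRel_zero)

lemma TRel_add_right_word: "u \<in> car Xi \<Longrightarrow> (w, ys) \<in> Gens \<Longrightarrow> hd w \<noteq> i \<Longrightarrow> k < length w \<Longrightarrow> x \<in> C (w ! k) \<Longrightarrow> y \<in> C (w ! k) \<Longrightarrow>
  fsub (fsub (delta (u, (0, qcls Rel (delta (w, ys[k := x + y]))))) (delta (u, (0, qcls Rel (delta (w, ys[k := x]))))))
     (delta (u, (0, qcls Rel (delta (w, ys[k := y]))))) \<in> TRel"
proof -
  assume u: "u \<in> car Xi" and g: "(w, ys) \<in> Gens" "hd w \<noteq> i" and k: "k < length w" and x: "x \<in> C (w ! k)" and y: "y \<in> C (w ! k)"
  have gx: "(w, ys[k := x]) \<in> Gens" "(w, ys[k := y]) \<in> Gens" using Gens_update g k x y by auto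
  have "fsub (delta (w, ys[k := x + y])) (fplus (delta (w, ys[k := x])) (delta (w, ys[k := y])))
     = fsub (fsub (delta (w, ys[k := x + y])) (delta (w, ys[k := x]))) (delta (w, ys[k := y]))"
    by (rule ext) (simp add: fsub_def fplus_def)
  then have c: "qcls Rel (delta (w, ys[k := x + y])) = qcls Rel (fplus (delta (w, ys[k := x])) (delta (w, ys[k := y])))"
    using qcls_Rel_eq Rel_add[OF g(1) k x y] by metis
  have "add Xfp (0, qcls Rel (delta (w, ys[k := x]))) (0, qcls Rel (delta (w, ys[k := y])))
      = (0, qcls Rel (delta (w, ys[k := x + y])))"
    unfolding c by (simp add: qadd_Rel)
  then show ?thesis using TRel_add_right[OF u Xsub_qcls[OF gx(1) g(2), of 0] Xsub_qcls[OF gx(2) g(2), of 0]] by simp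
qed

lemma TRel_scale_right_word: "u \<in> car Xi \<Longrightarrow> (w, ys) \<in> Gens \<Longrightarrow> hd w \<noteq> i \<Longrightarrow> k < length w \<Longrightarrow> x \<in> C (w ! k) \<Longrightarrow>
  fsub (delta (u, (0, qcls Rel (delta (w, ys[k := z *\<^sub>C x]))))) (fscale z (delta (u, (0, qcls Rel (delta (w, ys[k := x])))))) \<in> TRel"
proof -
  assume u: "u \<in> car Xi" and g: "(w, ys) \<in> Gens" "hd w \<noteq> i" and k: "k < length w" and x: "x \<in> C (w ! k)"
  have gx: "(w, ys[k := x]) \<in> Gens" using Gens_update g k x by auto
  have "scl Xfp z (0, qcls Rel (delta (w, ys[k := x]))) = (0, qcls Rel (delta (w, ys[k := z *\<^sub>C x])))"
    using qscl_Rel qcls_Rel_eq[OF Rel_scale[OF g(1) k x, of z]] by simp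
  then show ?thesis using TRel_scale_right[OF u Xsub_qcls[OF gx(1) g(2), of 0], of z] by simp
qed

lemma V_gen_Rel_add:
  assumes g: "(w, xs) \<in> Gens"
    and k: "k < length w"
    and x: "x \<in> C (w ! k)"
    and y: "y \<in> C (w ! k)"
  shows "lin_ext (V_gen C lm rm i) (fsub (fsub (delta (w, xs[k := x + y])) (delta (w, xs[k := x]))) (delta (w, xs[k := y]))) \<in> TRel"
proof -
  have ne: "xs \<noteq> []" "w \<noteq> []" using Gens_length[OF g] by auto
  show ?thesis
  proof (cases "hd w = i")
    case False
    then show ?thesis unfolding lin_ext_delta_diff3 using TRel_add_right_word[of "(1, 0)", OF _ g False k x y] by (simp add: V_gen_not_i car_Xi)
  next
    case hi: True
    show ?thesis
    proof (cases k)
      case 0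
      then have xy: "x \<in> C i" "y \<in> C i" using x y hi ne by (auto simp: hd_conv_nth)
      show ?thesis
      proof (cases "tl w = []")
        case True
        then show ?thesis unfolding lin_ext_delta_diff3 using TRel_add_left[of "(0, x)" "(0, y)" "(1, Rel)"] xy Xsub_unit
          by (simp add: V_gen_single[OF hi True] hd_update_0 ne 0 car_Xi)
      next
        case False
        have gt: "(tl w, tl xs) \<in> Gens" "hd (tl w) \<noteq> i" using Gens_tl[OF g False] hi by auto
        show ?thesis unfolding lin_ext_delta_diff3
          using TRel_add_left[of "(0, x)" "(0, y)" "(0, qcls Rel (delta (tl w, tl xs)))"] xy Xsub_qcls[OF gt]
          by (simp add: V_gen_Cons_i[OF hi False] hd_update_0 tl_update_0 ne 0 car_Xi)
      qed
    next
      case (Suc k')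
      have False': "tl w \<noteq> []" using k Suc ne by (cases w) auto
      have gt: "(tl w, tl xs) \<in> Gens" "hd (tl w) \<noteq> i" using Gens_tl[OF g False'] hi by auto
      have k': "k' < length (tl w)" "tl w ! k' = w ! k" using k Suc ne by (cases w; simp)+
      have hx: "(0, hd xs) \<in> car Xi" using Gens_hd[OF g] hi by (simp add: car_Xi)
      show ?thesis unfolding lin_ext_delta_diff3
        using TRel_add_right_word[OF hx gt k'(1), of x y] x y k'(2)
        by (simp add: V_gen_Cons_i[OF hi False'] hd_update_Suc tl_update_Suc ne Suc)
    qed
  qed
qed

lemma V_gen_Rel_scale:
  assumes g: "(w, xs) \<in> Gens"
    and k: "k < length w"
    and x: "x \<in> C (w ! k)"
  shows "lin_ext (V_gen C lm rm i) (fsub (delta (w, xs[k := z *\<^sub>C x])) (fscale z (delta (w, xs[k := x])))) \<in> TRel"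
proof -
  have ne: "xs \<noteq> []" "w \<noteq> []" using Gens_length[OF g] by auto
  show ?thesis
  proof (cases "hd w = i")
    case False
    then show ?thesis unfolding lin_ext_delta_diff_scale using TRel_scale_right_word[of "(1, 0)", OF _ g False k x, of z] by (simp add: V_gen_not_i car_Xi)
  next
    case hi: True
    show ?thesis
    proof (cases k)
      case 0
      then have xy: "x \<in> C i" using x hi ne by (auto simp: hd_conv_nth)
      show ?thesis
      proof (cases "tl w = []")
        case True
        then show ?thesis unfolding lin_ext_delta_diff_scale using TRel_scale_left[of "(0, x)" "(1, Rel)" z] xy Xsub_unit
          by (simp add: V_gen_single[OF hi True] hd_update_0 ne 0 car_Xi)
      next
        case False
        have gt: "(tl w, tl xs) \<in> Gens" "hd (tl w) \<noteq> i" using Gens_tl[OF g False] hi by auto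
        show ?thesis unfolding lin_ext_delta_diff_scale
          using TRel_scale_left[of "(0, x)" "(0, qcls Rel (delta (tl w, tl xs)))" z] xy Xsub_qcls[OF gt]
          by (simp add: V_gen_Cons_i[OF hi False] hd_update_0 tl_update_0 ne 0 car_Xi)
      qed
    next
      case (Suc k')
      have False': "tl w \<noteq> []" using k Suc ne by (cases w) auto
      have gt: "(tl w, tl xs) \<in> Gens" "hd (tl w) \<noteq> i" using Gens_tl[OF g False'] hi by auto
      have k': "k' < length (tl w)" "tl w ! k' = w ! k" using k Suc ne by (cases w; simp)+
      have hx: "(0, hd xs) \<in> car Xi" using Gens_hd[OF g] hi by (simp add: car_Xi)
      show ?thesis unfolding lin_ext_delta_diff_scale
        using TRel_scale_right_word[OF hx gt k'(1), of x z] x k'(2)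
        by (simp add: V_gen_Cons_i[OF hi False'] hd_update_Suc tl_update_Suc ne Suc)
    qed
  qed
qed

lemma V_gen_Rel_balanced:
  assumes g: "(w, xs) \<in> Gens"
    and k: "Suc k < length w"
    and x: "x \<in> C (w ! k)"
    and y: "y \<in> C (w ! Suc k)"
  shows "lin_ext (V_gen C lm rm i) (fsub (delta (w, xs[k := rm (w ! k) x b, Suc k := y])) (delta (w, xs[k := x, Suc k := lm (w ! Suc k) b y]))) \<in> TRel"
proof -
  have ne: "xs \<noteq> []" "w \<noteq> []" using Gens_length[OF g] by auto
  show ?thesis
  proof (cases "hd w = i")
    case False
    then show ?thesis unfolding lin_ext_delta_diff using TRel_qcls_cong[OF Rel_balanced[OF g k x y, of b]] by (simp add: V_gen_not_i)
  next
    case hi: True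
    have False': "tl w \<noteq> []" using k ne by (cases w) auto
    have gt: "(tl w, tl xs) \<in> Gens" "hd (tl w) \<noteq> i" using Gens_tl[OF g False'] hi by auto
    show ?thesis
    proof (cases k)
      case 0
      have xi: "x \<in> C i" using x hi ne 0 by (auto simp: hd_conv_nth)
      have w1: "w ! Suc 0 = hd (tl w)" "w ! Suc 0 = tl w ! 0" using ne False' by (cases w; auto simp: hd_conv_nth)+
      have tl0: "tl (xs[0 := v, Suc 0 := v']) = (tl xs)[0 := v']" for v v' by (cases xs) auto
      have hd0: "hd (xs[0 := v, Suc 0 := v']) = v" for v v' using ne by (cases xs) auto
      have gy: "(tl w, (tl xs)[0 := y]) \<in> Gens" using Gens_update[OF gt(1), of 0 y] y w1 False' 0 k by simp
      have "lac Xfp b (0, qcls Rel (delta (tl w, (tl xs)[0 := y]))) = (0, qcls Rel (delta (tl w, (tl xs)[0 := lm (w ! Suc 0) b y])))"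
        using qmap_lin_ext_Rel[OF Rel_lact fin_delta, of b "(tl w, (tl xs)[0 := y])"] lact_gen_update_hd[OF gt(1), of b y] w1
        by simp
      then show ?thesis unfolding lin_ext_delta_diff
        using TRel_balanced[of "(0, x)" "(0, qcls Rel (delta (tl w, (tl xs)[0 := y])))" b] xi Xsub_qcls[OF gy gt(2)]
        using hi ne by (simp add: V_gen_Cons_i[OF hi False'] tl0 hd0 0 car_Xi hd_conv_nth)
    next
      case (Suc k')
      have k': "Suc k' < length (tl w)" "tl w ! k' = w ! k" "tl w ! Suc k' = w ! Suc k" using k Suc ne by (cases w; simp)+
      have e: "xs[Suc k' := v, Suc (Suc k') := v'] = hd xs # (tl xs)[k' := v, Suc k' := v']" for v v'
        using ne by (cases xs) auto
      show ?thesis unfolding lin_ext_delta_diff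
        using TRel_qcls_cong[OF Rel_balanced[OF gt(1) k'(1), of x y b], of "(0, hd xs)" 0] x y k'
        by (simp add: V_gen_Cons_i[OF hi False'] e Suc)
    qed
  qed
qed

lemma Rel_V_gen: "n \<in> Rel \<Longrightarrow> lin_ext (V_gen C lm rm i) n \<in> TRel"
  by (rule Rel_lin_ext[where S'=TRel_gens, unfolded TRel_eq[symmetric]])
    (simp_all add: V_gen_Rel_add V_gen_Rel_scale V_gen_Rel_balanced)

text \<open>The two components of the balanced map \<open>u \<otimes> (b, c) \<mapsto> u b\<close> from
  \<open>\<X>\<^sub>i \<otimes>\<^sub>B \<X>(i)\<close> to \<open>\<X>\<^sub>i = B \<oplus> \<X>\<^sup>\<circ>\<^sub>i\<close>; they vanish on the tensor relations.\<close>

definition bal_fst :: "('b::calg1 \<times> 'x) \<times> ('b \<times> 'c) \<Rightarrow> 'b" where "bal_fst p = fst (fst p) * fst (snd p)"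

definition bal_snd :: "('b \<times> 'x) \<times> ('b \<times> 'c) \<Rightarrow> 'x" where "bal_snd p = rm i (snd (fst p)) (fst (snd p))"

lemma bal_TRel: "t \<in> TRel \<Longrightarrow> lincomb bal_fst t = 0 \<and> lincomb bal_snd t = 0"
proof
  assume t: "t \<in> TRel"
  show "lincomb bal_fst t = 0"
  proof (rule TRel_lincomb[OF _ _ _ _ _ t])
    show "bal_fst (add Xi u u', v) - bal_fst (u, v) - bal_fst (u', v) = 0" for u u' v
      by (cases u; cases u') (simp add: bal_fst_def distrib_right)
    show "bal_fst (u, add Xfp v v') - bal_fst (u, v) - bal_fst (u, v') = 0" for u v v'
      by (cases v; cases v') (simp add: bal_fst_def distrib_left)
    show "bal_fst (scl Xi z u, v) - z *\<^sub>C bal_fst (u, v) = 0" for u v z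
      by (cases u) (simp add: bal_fst_def mult_scaleC_left)
    show "bal_fst (u, scl Xfp z v) - z *\<^sub>C bal_fst (u, v) = 0" for u v z
      by (cases v) (simp add: bal_fst_def mult_scaleC_right)
    show "bal_fst (rac Xi u b, v) - bal_fst (u, lac Xfp b v) = 0" for u v b
      by (cases u; cases v) (simp add: bal_fst_def mult.assoc)
  qed
  show "lincomb bal_snd t = 0"
  proof (rule TRel_lincomb[OF _ _ _ _ _ t])
    show "bal_snd (add Xi u u', v) - bal_snd (u, v) - bal_snd (u', v) = 0" if "u \<in> car Xi" "u' \<in> car Xi" for u u' v
      using that by (cases u; cases u') (simp add: bal_snd_def car_Xi rm_add_left)
    show "bal_snd (u, add Xfp v v') - bal_snd (u, v) - bal_snd (u, v') = 0" if "u \<in> car Xi" for u v v'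
      using that by (cases u; cases v; cases v') (simp add: bal_snd_def car_Xi rm_add_right)
    show "bal_snd (scl Xi z u, v) - z *\<^sub>C bal_snd (u, v) = 0" if "u \<in> car Xi" for u v z
      using that by (cases u) (simp add: bal_snd_def car_Xi rm_scale_left)
    show "bal_snd (u, scl Xfp z v) - z *\<^sub>C bal_snd (u, v) = 0" if "u \<in> car Xi" for u v z
      using that by (cases u; cases v) (simp add: bal_snd_def car_Xi rm_scale_right)
    show "bal_snd (rac Xi u b, v) - bal_snd (u, lac Xfp b v) = 0" if "u \<in> car Xi" for u v b
      using that by (cases u; cases v) (simp add: bal_snd_def car_Xi rm_rm_assoc)
  qed
qed

lemma fin_V_gen: "fin (V_gen C lm rm i g)"
  by (cases g) (simp add: V_gen_def Let_def fin_delta)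

lemma bal_fst_V_gen: "lincomb bal_fst (V_gen C lm rm i g) = 0"
  by (cases g) (simp add: V_gen_def Let_def bal_fst_def)

lemma bal_snd_V_gen: "g \<in> Gens \<Longrightarrow> lincomb bal_snd (V_gen C lm rm i g) = single_entry i g"
proof -
  assume g: "g \<in> Gens"
  obtain w xs where gw: "g = (w, xs)" by fastforce
  have gg: "(w, xs) \<in> Gens" using g gw by simp
  have hx: "hd xs \<in> C (hd w)" using Gens_hd[OF gg] .
  have ne: "w \<noteq> []" using Gens_length[OF gg] by simp
  have w1: "(w = [i]) = (hd w = i \<and> tl w = [])" using ne by (cases w) auto
  show ?thesis using hx unfolding gw
    by (cases "hd w = i"; cases "tl w = []") (simp_all add: V_gen_def Let_def bal_snd_def single_entry_def w1)
qed

lemma V_map_qcls: "fin f \<Longrightarrow> V_map C lm rm i (b, qcls Rel f) = qcls TRel (fplus (delta ((b, 0), unit_Xsub)) (lin_ext (V_gen C lm rm i) f))"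
proof (rule set_eqI, rule iffI)
  fix g assume f: "fin f" and "g \<in> V_map C lm rm i (b, qcls Rel f)"
  then obtain f' where f': "fsub f' f \<in> Rel" and g: "fsub g (fplus (delta ((b, 0), unit_Xsub)) (lin_ext (V_gen C lm rm i) f')) \<in> TRel"
    unfolding V_map_def qcls_def by auto
  have ff: "fin f'"
  proof -
    have "f' = fplus (fsub f' f) f" by (auto simp: fsub_def fplus_def)
    then show ?thesis using Rel_fin[OF f'] f by (metis fin_fplus)
  qed
  have "fsub (lin_ext (V_gen C lm rm i) f') (lin_ext (V_gen C lm rm i) f) \<in> TRel"
    using Rel_V_gen[OF f'] by (simp add: lin_ext_fsub ff f)
  from TRel_fplus[OF g this]
  show "g \<in> qcls TRel (fplus (delta ((b, 0), unit_Xsub)) (lin_ext (V_gen C lm rm i) f))"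
    by (simp add: qcls_def fsub_def fplus_def algebra_simps)
next
  fix g assume "g \<in> qcls TRel (fplus (delta ((b, 0), unit_Xsub)) (lin_ext (V_gen C lm rm i) f))"
  moreover have "f \<in> qcls Rel f" by (simp add: qcls_def fsub_self Rel_zero)
  ultimately show "g \<in> V_map C lm rm i (b, qcls Rel f)"
    unfolding V_map_def qcls_def by auto
qed

section \<open>The compression beta_i\<close>

definition embed :: "'b \<times> 'x \<Rightarrow> 'b \<times> ('i, 'x) fpq" where
  "embed u = (fst u, qcls Rel (delta ([i], [snd u])))"

definition tensor_gen :: "('b \<times> 'x \<Rightarrow> 'b \<times> 'x) \<Rightarrow> ('b \<times> 'x) \<times> ('b \<times> ('i, 'x) fpq) \<Rightarrow> ('b \<times> 'x) \<times> ('b \<times> ('i, 'x) fpq) \<Rightarrow> complex" where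
  "tensor_gen a = (\<lambda>(u, v). delta (a u, v))"

lemma TRel_tensor_gen: "a \<in> Lop Xi \<Longrightarrow> t \<in> TRel \<Longrightarrow> lin_ext (tensor_gen a) t \<in> TRel"
proof (rule TRel_lin_ext)
  assume a: "a \<in> Lop Xi"
  note L = LopD[OF a]
  show "lin_ext (tensor_gen a) (fsub (fsub (delta (add Xi u u', v)) (delta (u, v))) (delta (u', v))) \<in> TRel"
    if "u \<in> car Xi" "u' \<in> car Xi" "v \<in> Xsub_i" for u u' v
    using TRel_add_left[OF L(1)[OF that(1)] L(1)[OF that(2)] that(3)] L(2)[OF that(1,2)]
    by (simp add: lin_ext_delta_diff3 tensor_gen_def)
  show "lin_ext (tensor_gen a) (fsub (fsub (delta (u, add Xfp v v')) (delta (u, v))) (delta (u, v'))) \<in> TRel"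
    if "u \<in> car Xi" "v \<in> Xsub_i" "v' \<in> Xsub_i" for u v v'
    using TRel_add_right[OF L(1)[OF that(1)] that(2,3)] by (simp add: lin_ext_delta_diff3 tensor_gen_def)
  show "lin_ext (tensor_gen a) (fsub (delta (scl Xi z u, v)) (fscale z (delta (u, v)))) \<in> TRel"
    if "u \<in> car Xi" "v \<in> Xsub_i" for u v z
    using TRel_scale_left[OF L(1)[OF that(1)] that(2), of z] L(3)[OF that(1)] by (simp add: lin_ext_delta_diff_scale tensor_gen_def)
  show "lin_ext (tensor_gen a) (fsub (delta (u, scl Xfp z v)) (fscale z (delta (u, v)))) \<in> TRel"
    if "u \<in> car Xi" "v \<in> Xsub_i" for u v z
    using TRel_scale_right[OF L(1)[OF that(1)] that(2), of z] by (simp add: lin_ext_delta_diff_scale tensor_gen_def)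
  show "lin_ext (tensor_gen a) (fsub (delta (rac Xi u b, v)) (delta (u, lac Xfp b v))) \<in> TRel"
    if "u \<in> car Xi" "v \<in> Xsub_i" for u v b
    using TRel_balanced[OF L(1)[OF that(1)] that(2), of b] L(5)[OF that(1)] by (simp add: lin_ext_delta_diff tensor_gen_def)
qed

lemma V_map_embed: "snd p \<in> C i \<Longrightarrow> V_map C lm rm i (embed p) = qcls TRel (delta (p, unit_Xsub))"
proof (cases p)
  case (Pair b x)
  assume x: "snd p \<in> C i"
  have "V_map C lm rm i (embed p) = qcls TRel (fplus (delta ((b, 0), unit_Xsub)) (delta ((0, x), unit_Xsub)))"
    by (simp add: Pair embed_def V_map_qcls fin_delta V_gen_single)
  also have "\<dots> = qcls TRel (delta ((b, x), unit_Xsub))"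
  proof (rule qcls_TRel_eq[symmetric])
    have "fsub (delta ((b, x), unit_Xsub)) (fplus (delta ((b, 0), unit_Xsub)) (delta ((0, x), unit_Xsub)))
      = fsub (fsub (delta (add Xi (b, 0) (0, x), unit_Xsub)) (delta ((b, 0), unit_Xsub))) (delta ((0, x), unit_Xsub))"
      by (rule ext) (simp add: fsub_def fplus_def)
    then show "fsub (delta ((b, x), unit_Xsub)) (fplus (delta ((b, 0), unit_Xsub)) (delta ((0, x), unit_Xsub))) \<in> TRel"
      using TRel_add_left[of "(b, 0)" "(0, x)" unit_Xsub] x Xsub_unit by (simp add: Pair car_Xi)
  qed
  finally show ?thesis by (simp add: Pair)
qed

lemma tensor_I_qcls: "a \<in> Lop Xi \<Longrightarrow> fin g \<Longrightarrow> tensor_I C lm rm i a (qcls TRel g) = qcls TRel (lin_ext (tensor_gen a) g)"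
proof -
  assume a: "a \<in> Lop Xi" and g: "fin g"
  have e: "(\<lambda>(u, v). delta (a u, v)) = tensor_gen a" by (simp add: tensor_gen_def)
  have "qmap (cspan TRel_gens) (lin_ext (tensor_gen a)) (qcls TRel g) = qcls (cspan TRel_gens) (lin_ext (tensor_gen a) g)"
  proof (rule qmap_qcls)
    fix f' assume f': "fsub f' g \<in> TRel"
    have ff: "fin f'"
    proof -
      have "f' = fplus (fsub f' g) g" by (auto simp: fsub_def fplus_def)
      then show ?thesis using TRel_fin[OF f'] g by (metis fin_fplus)
    qed
    show "fsub (lin_ext (tensor_gen a) f') (lin_ext (tensor_gen a) g) \<in> cspan TRel_gens"
      using TRel_tensor_gen[OF a f'] TRel_eq by (simp add: lin_ext_fsub ff g)
  qed (rule TRel_zero)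
  then show ?thesis unfolding tensor_I_def e using TRel_eq by simp
qed

lemma P_i_embed: "f \<in> free_on Gens \<Longrightarrow> P_i C lm rm i (b, qcls Rel f) = embed (b, single_coord f)"
  using restrict_single_equiv[of f] qcls_Rel_eq[of "restrict_single i f" "delta ([i], [single_coord f])"]
  by (simp add: P_i_qcls free_on_fin embed_def)

lemma embed_car: "snd p \<in> C i \<Longrightarrow> embed p \<in> car Xfp"
  by (simp add: embed_def car_Xfp qspace_mem delta_free_on Gens_single)

text \<open>Applied to a representative of \<open>V\<^sub>i \<xi>\<close>, the balanced maps read off both coordinates of
  \<open>P\<^sub>i \<xi>\<close>; so \<open>P\<^sub>i \<xi>\<close> is determined by \<open>V\<^sub>i \<xi>\<close> when the latter is an elementary tensor \<open>U \<otimes> 1\<close>.\<close>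

lemma P_i_of_V_map_preimage: "xt \<in> car Xfp \<Longrightarrow> U \<in> car Xi \<Longrightarrow> V_map C lm rm i xt = qcls TRel (delta (U, unit_Xsub)) \<Longrightarrow>
   P_i C lm rm i xt = embed U"
proof -
  assume xt: "xt \<in> car Xfp" and U: "U \<in> car Xi" and V: "V_map C lm rm i xt = qcls TRel (delta (U, unit_Xsub))"
  obtain b f where xf: "xt = (b, qcls Rel f)" and f: "f \<in> free_on Gens" using car_Xfp_cases[OF xt] by blast
  have ff: "fin f" using f by (rule free_on_fin)
  let ?g0 = "fplus (delta ((b, 0), unit_Xsub)) (lin_ext (V_gen C lm rm i) f)"
  have aV: "\<forall>g. fin (V_gen C lm rm i g)" using fin_V_gen by blast
  have fg0: "fin ?g0" by (rule fin_fplus[OF fin_delta fin_lin_ext[OF ff aV]])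
  have "?g0 \<in> V_map C lm rm i xt" unfolding xf V_map_qcls[OF ff] by (rule qcls_TRel_self)
  then have "fsub ?g0 (delta (U, unit_Xsub)) \<in> TRel" using V by (simp add: qcls_def)
  from bal_TRel[OF this] have z: "lincomb bal_fst ?g0 = bal_fst (U, unit_Xsub)" "lincomb bal_snd ?g0 = bal_snd (U, unit_Xsub)"
    by (simp_all add: lincomb_fsub fg0 fin_delta)
  have B: "lincomb bal_fst ?g0 = b"
    unfolding lincomb_fplus[OF fin_delta fin_lin_ext[OF ff aV]] lincomb_lin_ext[OF ff aV]
    by (simp add: bal_fst_V_gen bal_fst_def)
  have "lincomb (\<lambda>g. lincomb bal_snd (V_gen C lm rm i g)) f = single_coord f"
    by (rule lincomb_cong) (use f bal_snd_V_gen in \<open>auto simp: free_on_def\<close>)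
  then have X: "lincomb bal_snd ?g0 = single_coord f"
    unfolding lincomb_fplus[OF fin_delta fin_lin_ext[OF ff aV]] lincomb_lin_ext[OF ff aV]
    by (simp add: bal_snd_def)
  have "U = (b, single_coord f)" using z B X U by (cases U) (simp add: bal_fst_def bal_snd_def car_Xi)
  then show ?thesis using P_i_embed[OF f] xf by simp
qed

text \<open>\<open>\<lambda>\<^sub>i\<close> uses an arbitrary preimage under \<open>V\<^sub>i\<close> (\<open>inv_into\<close>); by the previous lemma the choice
  does not affect \<open>P\<^sub>i\<close>.\<close>

lemma beta_i_qcls:
  assumes a: "a \<in> Lop Xi" and f: "f \<in> free_on Gens"
  shows "beta_i C lm rm i a (b, qcls Rel f) = embed (a (b, single_coord f))"
proof -
  let ?U = "(b, single_coord f)"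
  have U: "?U \<in> car Xi" using single_coord_in_C[OF f] by (simp add: car_Xi)
  then have aU: "a ?U \<in> car Xi" by (rule LopD(1)[OF a])
  have img: "V_map C lm rm i (embed (a ?U)) \<in> V_map C lm rm i ` car Xfp"
    using aU by (simp add: embed_car car_Xi')
  define \<xi> where "\<xi> = inv_into (car Xfp) (V_map C lm rm i) (V_map C lm rm i (embed (a ?U)))"
  have "beta_i C lm rm i a (b, qcls Rel f) = P_i C lm rm i \<xi>"
    using U aU by (simp add: beta_i_def lambda_i_def \<xi>_def P_i_embed[OF f] V_map_embed car_Xi'
        tensor_I_qcls[OF a fin_delta] tensor_gen_def)
  also have "\<dots> = embed (a ?U)"
  proof (rule P_i_of_V_map_preimage)
    show "\<xi> \<in> car Xfp" unfolding \<xi>_def by (rule inv_into_into[OF img])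
    show "V_map C lm rm i \<xi> = qcls TRel (delta (a ?U, unit_Xsub))"
      using f_inv_into_f[OF img] aU by (simp add: \<xi>_def V_map_embed car_Xi')
  qed (rule aU)
  finally show ?thesis .
qed

lemma delta_single_add_eq: "fsub (delta ([i], [x + y])) (fplus (delta ([i], [x])) (delta ([i], [y])))
   = fsub (fsub (delta ([i], [x][0 := x + y])) (delta ([i], [x][0 := x]))) (delta ([i], [x][0 := y]))"
  by (rule ext) (simp add: fsub_def fplus_def)

lemma embed_add: "snd p \<in> C i \<Longrightarrow> snd q \<in> C i \<Longrightarrow> add Xfp (embed p) (embed q) = embed (add Xi p q)"
proof -
  assume p: "snd p \<in> C i" and q: "snd q \<in> C i"
  have "qcls Rel (delta ([i], [snd p + snd q])) = qcls Rel (fplus (delta ([i], [snd p])) (delta ([i], [snd q])))"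
    by (rule qcls_Rel_eq) (unfold delta_single_add_eq, rule Rel_add, use p q Gens_single in auto)
  then show ?thesis by (simp add: embed_def add_Xi' qadd_Rel)
qed

lemma embed_scl: "snd p \<in> C i \<Longrightarrow> scl Xfp z (embed p) = embed (scl Xi z p)"
proof -
  assume p: "snd p \<in> C i"
  have "qcls Rel (delta ([i], [z *\<^sub>C snd p])) = qcls Rel (fscale z (delta ([i], [snd p])))"
    using qcls_Rel_eq Rel_scale[OF Gens_single[OF p], of 0 "snd p" z] p by simp
  then show ?thesis by (simp add: embed_def scl_Xi' qscl_Rel)
qed

lemma embed_lac: "snd p \<in> C i \<Longrightarrow> lac Xfp b (embed p) = embed (lac Xi b p)"
proof -
  assume p: "snd p \<in> C i"
  show ?thesis using qmap_lin_ext_Rel[OF Rel_lact fin_delta, of b "([i], [snd p])"]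
    by (simp add: embed_def lac_Xi' lact_gen_def)
qed

lemma embed_rac: "snd p \<in> C i \<Longrightarrow> rac Xfp (embed p) b = embed (rac Xi p b)"
proof -
  assume p: "snd p \<in> C i"
  show ?thesis using qmap_lin_ext_Rel[OF Rel_ract fin_delta, of b "([i], [snd p])"]
    by (simp add: embed_def rac_Xi' ract_gen_def)
qed

lemma beta_i_embed: "a \<in> Lop Xi \<Longrightarrow> x \<in> C i \<Longrightarrow> beta_i C lm rm i a (embed (b, x)) = embed (a (b, x))"
  using beta_i_qcls[of a "delta ([i], [x])" b] by (simp add: embed_def delta_free_on Gens_single single_entry_def)

lemma beta_i_car: "a \<in> Lop Xi \<Longrightarrow> u \<in> car Xfp \<Longrightarrow> beta_i C lm rm i a u \<in> car Xfp"
  by (auto dest!: car_Xfp_cases simp: beta_i_qcls single_coord_in_C Lop_snd_in_C embed_car)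

lemma beta_i_add:
  assumes a: "a \<in> Lop Xi" and u: "u \<in> car Xfp" and u': "u' \<in> car Xfp"
  shows "beta_i C lm rm i a (add Xfp u u') = add Xfp (beta_i C lm rm i a u) (beta_i C lm rm i a u')"
proof -
  obtain b f where uf: "u = (b, qcls Rel f)" and f: "f \<in> free_on Gens" using car_Xfp_cases[OF u] by blast
  obtain b' f' where uf': "u' = (b', qcls Rel f')" and f': "f' \<in> free_on Gens" using car_Xfp_cases[OF u'] by blast
  have "add Xfp u u' = (b + b', qcls Rel (fplus f f'))" by (simp add: uf uf' qadd_Rel)
  moreover have "single_coord (fplus f f') = single_coord f + single_coord f'"
    by (simp add: lincomb_fplus free_on_fin[OF f] free_on_fin[OF f'])
  ultimately show ?thesis
    using a f f' LopD(2)[OF a, of "(b, single_coord f)" "(b', single_coord f')"]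
    by (simp add: uf uf' beta_i_qcls free_on_fplus single_coord_in_C Lop_snd_in_C embed_add car_Xi)
qed

lemma beta_i_scl:
  assumes a: "a \<in> Lop Xi" and u: "u \<in> car Xfp"
  shows "beta_i C lm rm i a (scl Xfp z u) = scl Xfp z (beta_i C lm rm i a u)"
proof -
  obtain b f where uf: "u = (b, qcls Rel f)" and f: "f \<in> free_on Gens" using car_Xfp_cases[OF u] by blast
  have "scl Xfp z u = (z *\<^sub>C b, qcls Rel (fscale z f))" by (simp add: uf qscl_Rel)
  moreover have "single_coord (fscale z f) = z *\<^sub>C single_coord f" by (simp add: lincomb_fscale free_on_fin[OF f])
  ultimately show ?thesis
    using a f LopD(3)[OF a, of "(b, single_coord f)" z]
    by (simp add: uf beta_i_qcls free_on_fscale single_coord_in_C Lop_snd_in_C embed_scl car_Xi)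
qed

lemma beta_i_lac:
  assumes a: "a \<in> Lop Xi" and u: "u \<in> car Xfp"
  shows "beta_i C lm rm i a (lac Xfp c u) = lac Xfp c (beta_i C lm rm i a u)"
proof -
  obtain b f where uf: "u = (b, qcls Rel f)" and f: "f \<in> free_on Gens" using car_Xfp_cases[OF u] by blast
  have "lac Xfp c u = (c * b, qcls Rel (lin_ext (lact_gen lm c) f))"
    by (simp add: uf qmap_lin_ext_Rel[OF Rel_lact free_on_fin[OF f]])
  then show ?thesis
    using a f LopD(4)[OF a, of "(b, single_coord f)" c] lin_ext_free_on[OF f lact_gen_Gens]
    by (simp add: uf beta_i_qcls single_coord_lact single_coord_in_C Lop_snd_in_C embed_lac car_Xi)
qed

lemma beta_i_rac:
  assumes a: "a \<in> Lop Xi" and u: "u \<in> car Xfp"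
  shows "beta_i C lm rm i a (rac Xfp u c) = rac Xfp (beta_i C lm rm i a u) c"
proof -
  obtain b f where uf: "u = (b, qcls Rel f)" and f: "f \<in> free_on Gens" using car_Xfp_cases[OF u] by blast
  have "rac Xfp u c = (b * c, qcls Rel (lin_ext (ract_gen rm c) f))"
    by (simp add: uf qmap_lin_ext_Rel[OF Rel_ract free_on_fin[OF f]])
  then show ?thesis
    using a f LopD(5)[OF a, of "(b, single_coord f)" c] lin_ext_free_on[OF f ract_gen_Gens]
    by (simp add: uf beta_i_qcls single_coord_ract single_coord_in_C Lop_snd_in_C embed_rac car_Xi)
qed

lemma beta_i_Lop: "a \<in> Lop Xi \<Longrightarrow> beta_i C lm rm i a \<in> Lop Xfp"
  using beta_i_car beta_i_add beta_i_scl beta_i_lac beta_i_rac unfolding Lop_def[of Xfp] by blast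

lemma beta_i_alg_hom: "is_alg_hom Xi Xfp (beta_i C lm rm i)"
  unfolding is_alg_hom_def
proof (intro conjI ballI allI)
  fix a assume "a \<in> Lop Xi"
  then show "beta_i C lm rm i a \<in> Lop Xfp" by (rule beta_i_Lop)
next
  fix a a' v assume a: "a \<in> Lop Xi" and a': "a' \<in> Lop Xi" and v: "v \<in> car Xfp"
  obtain b f where v: "v = (b, qcls Rel f)" and f: "f \<in> free_on Gens" using car_Xfp_cases[OF v] by blast
  let ?U = "(b, single_coord f)"
  have U: "snd (a ?U) \<in> C i" "snd (a' ?U) \<in> C i"
    using Lop_snd_in_C[OF a single_coord_in_C[OF f]] Lop_snd_in_C[OF a' single_coord_in_C[OF f]] by auto
  have "beta_i C lm rm i a (beta_i C lm rm i a' v) = embed (a (a' ?U))"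
    using beta_i_embed[OF a U(2), of "fst (a' ?U)"] by (simp add: v beta_i_qcls[OF a' f])
  then show "beta_i C lm rm i (a \<circ> a') v = beta_i C lm rm i a (beta_i C lm rm i a' v)"
    by (simp add: v beta_i_qcls[OF Lop_comp[OF a a'] f])
  show "beta_i C lm rm i (\<lambda>u. add Xi (a u) (a' u)) v = add Xfp (beta_i C lm rm i a v) (beta_i C lm rm i a' v)"
    by (simp add: v beta_i_qcls[OF _ f] a a' Lop_add embed_add[OF U])
next
  fix z a v assume a: "a \<in> Lop Xi" and v: "v \<in> car Xfp"
  obtain b f where v: "v = (b, qcls Rel f)" and f: "f \<in> free_on Gens" using car_Xfp_cases[OF v] by blast
  show "beta_i C lm rm i (\<lambda>u. scl Xi z (a u)) v = scl Xfp z (beta_i C lm rm i a v)"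
    using Lop_snd_in_C[OF a single_coord_in_C[OF f]]
    by (simp add: v beta_i_qcls[OF _ f] a Lop_scl embed_scl)
qed

end

theorem corollary2p3:
  fixes C :: "'i \<Rightarrow> 'x::cvec set"
    and lm :: "'i \<Rightarrow> 'b::calg1 \<Rightarrow> 'x \<Rightarrow> 'x"
    and rm :: "'i \<Rightarrow> 'x \<Rightarrow> 'b \<Rightarrow> 'x"
    and i :: 'i
  assumes "\<forall>j. bimod (C j) (lm j) (rm j)"
  shows "is_alg_hom (Xmod C lm rm i) (FP C lm rm) (beta_i C lm rm i)"
proof -
  interpret free_product C lm rm i by (rule free_product.intro) (rule assms)
  show ?thesis by (rule beta_i_alg_hom)
qed

end
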